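(* (1) Every $a\in\mathbb{S}_1\setminus F$, viewed as a linear operator on $K[x]$, has finite-dimensional kernel and cokernel, and $\mathrm{ind}(a)=-\deg_x(\bar a)$, where $\bar a$ is the image of $a$ in $\mathbb{S}_1/F\simeq K[x,x^{-1}]$. (2) $\mathrm{ind}(\sigma(a))=\mathrm{ind}(a)$ for all $\sigma\in\mathrm{Aut}_{K\text{-alg}}(\mathbb{S}_1)$ and all $a\in\mathbb{S}_1\setminus F$.
   Context: $K$ is a field of characteristic zero. $\mathbb{S}_1=K\langle x,y\mid yx=1\rangle$ acts faithfully on $P_1=K[x]$ by $x*x^i=x^{i+1}$, $y*x^i=x^{i-1}$ ($i\ge1$), $y*1=0$; we regard $\mathbb{S}_1\subset\mathrm{End}_K(K[x])$. $E_{ij}:=x^iy^j-x^{i+1}y^{j+1}$ and $F=\bigoplus_{i,j\in\mathbb{N}}KE_{ij}$ is an ideal with $\mathbb{S}_1/F\simeq K[x,x^{-1}]$ via $x\mapsto x$, $y\mapsto x^{-1}$. For a nonzero Laurent polynomial $u=\sum_{i=s}^d\lambda_ix^i$ with $\lambda_d\ne0$, $\deg_x(u):=d$. For a linear map $\varphi$ with finite-dimensional kernel and cokernel, $\mathrm{ind}(\varphi):=\dim\ker\varphi-\dim\mathrm{coker}\,\varphi$. *)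

theory Defs
  imports "HOL-Computational_Algebra.Polynomial" "HOL-Computational_Algebra.Formal_Laurent_Series"
begin

definition opX :: "'k::field_char_0 poly \<Rightarrow> 'k poly" where
  "opX p = pCons 0 p"

definition opY :: "'k::field_char_0 poly \<Rightarrow> 'k poly" where
  "opY p = poly_shift 1 p"

text \<open>The Jacobson algebra S_1, viewed inside End_K(K[x]): the K-subalgebra generated by x and y.\<close>

inductive_set S1 :: "('k::field_char_0 poly \<Rightarrow> 'k poly) set" where
  S1_X: "opX \<in> S1"
| S1_Y: "opY \<in> S1"
| S1_one: "id \<in> S1"
| S1_add: "a \<in> S1 \<Longrightarrow> b \<in> S1 \<Longrightarrow> (\<lambda>p. a p + b p) \<in> S1"
| S1_smult: "a \<in> S1 \<Longrightarrow> (\<lambda>p. smult c (a p)) \<in> S1"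
| S1_mult: "a \<in> S1 \<Longrightarrow> b \<in> S1 \<Longrightarrow> a \<circ> b \<in> S1"

definition xy :: "nat \<Rightarrow> nat \<Rightarrow> 'k::field_char_0 poly \<Rightarrow> 'k poly" where
  "xy i j = (opX ^^ i) \<circ> (opY ^^ j)"

definition E :: "nat \<Rightarrow> nat \<Rightarrow> 'k::field_char_0 poly \<Rightarrow> 'k poly" where
  "E i j = (\<lambda>p. xy i j p - xy (Suc i) (Suc j) p)"

definition supp2 :: "(nat \<Rightarrow> nat \<Rightarrow> 'k::zero) \<Rightarrow> (nat \<times> nat) set" where
  "supp2 c = {(i, j). c i j \<noteq> 0}"

definition F :: "('k::field_char_0 poly \<Rightarrow> 'k poly) set" where
  "F = {a. \<exists>c. finite (supp2 c) \<and>
          a = (\<lambda>p. \<Sum>(i, j)\<in>supp2 c. smult (c i j) (E i j p))}"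

definition xy_comb :: "(nat \<Rightarrow> nat \<Rightarrow> 'k::field_char_0) \<Rightarrow> 'k poly \<Rightarrow> 'k poly" where
  "xy_comb c = (\<lambda>p. \<Sum>(i, j)\<in>supp2 c. smult (c i j) (xy i j p))"

definition laurent_comb :: "(nat \<Rightarrow> nat \<Rightarrow> 'k::field_char_0) \<Rightarrow> 'k fls" where
  "laurent_comb c = (\<Sum>(i, j)\<in>supp2 c. fls_const (c i j) * fls_X_intpow (int i - int j))"

definition bar :: "('k::field_char_0 poly \<Rightarrow> 'k poly) \<Rightarrow> 'k fls" where
  "bar a = (THE u. \<exists>c. finite (supp2 c) \<and> a = xy_comb c \<and> u = laurent_comb c)"

definition laurent_deg :: "'k::zero fls \<Rightarrow> int" where
  "laurent_deg u = Max {n. fls_nth u n \<noteq> 0}"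

definition ker :: "('k::field poly \<Rightarrow> 'k poly) \<Rightarrow> 'k poly set" where
  "ker a = {p. a p = 0}"

definition fin_dim_ker :: "('k::field poly \<Rightarrow> 'k poly) \<Rightarrow> bool" where
  "fin_dim_ker a \<longleftrightarrow> (\<exists>B. finite B \<and> ker a \<subseteq> module.span smult B)"

text \<open>Cokernel K[x]/im(a) is finite-dimensional iff finitely many vectors together with im(a)
  span K[x]; its dimension is the least number of such vectors.\<close>

definition fin_dim_coker :: "('k::field poly \<Rightarrow> 'k poly) \<Rightarrow> bool" where
  "fin_dim_coker a \<longleftrightarrow> (\<exists>B. finite B \<and> module.span smult (range a \<union> B) = UNIV)"

definition dim_coker :: "('k::field poly \<Rightarrow> 'k poly) \<Rightarrow> nat" where
  "dim_coker a = (LEAST n. \<exists>B. finite B \<and> card B = n \<and> module.span smult (range a \<union> B) = UNIV)"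

definition ind :: "('k::field poly \<Rightarrow> 'k poly) \<Rightarrow> int" where
  "ind a = int (vector_space.dim smult (ker a)) - int (dim_coker a)"

definition is_S1_aut :: "(('k::field_char_0 poly \<Rightarrow> 'k poly) \<Rightarrow> ('k poly \<Rightarrow> 'k poly)) \<Rightarrow> bool" where
  "is_S1_aut \<sigma> \<longleftrightarrow> bij_betw \<sigma> S1 S1
     \<and> (\<forall>a\<in>S1. \<forall>b\<in>S1. \<sigma> (\<lambda>p. a p + b p) = (\<lambda>p. \<sigma> a p + \<sigma> b p))
     \<and> (\<forall>a\<in>S1. \<forall>c. \<sigma> (\<lambda>p. smult c (a p)) = (\<lambda>p. smult c (\<sigma> a p)))
     \<and> (\<forall>a\<in>S1. \<forall>b\<in>S1. \<sigma> (a \<circ> b) = \<sigma> a \<circ> \<sigma> b)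
     \<and> \<sigma> id = id"

end

theory Submission
  imports Defs "HOL-Computational_Algebra.Polynomial_FPS"
begin

(* Every a in S_1 is a finite combination of monomials x^i y^j. On the multiples of
   x^N (N at least every j occurring) it acts as multiplication by its symbol, the Laurent
   polynomial a-bar. If a-bar = 0, then a only depends on the first N coefficients and is a
   combination of the E_ij, i.e. a lies in F. Otherwise, on x^N K[x] the operator a coincides
   with the model operator p |-> q (p shifted down by N), q = a(x^N) = a-bar x^N, whose kernel
   (polynomials of degree < N) and cokernel (K[x]/(q)) have dimensions N and deg q. Changing a
   linear operator on a line complementary to a hyperplane changes neither the finiteness of
   kernel and cokernel nor the index; passing through the N hyperplanes coeff_k = 0 (k < N)
   transfers the index N - deg q = -deg(a-bar) from the model operator to a.

   The symbol map is a K-algebra homomorphism S_1 -> K[x,x^-1]. For an automorphism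
   sigma, the symbols of sigma(y) and sigma(x) are mutually inverse, hence Laurent monomials
   l x^k and l^-1 x^-k. Surjectivity of sigma forces k = 1 or k = -1, and k = -1 is impossible
   since sigma(x) is injective (index <= 0) but would have index 1 by part (1). So the symbol of
   sigma(a) is a-bar(l x), which has the same degree as a-bar, and part (1) gives the claim. *)

interpretation pvs: vector_space "smult :: 'k::field \<Rightarrow> 'k poly \<Rightarrow> 'k poly"
  by unfold_locales (auto simp: smult_add_right smult_add_left)

definition lin_op :: "('k::field poly \<Rightarrow> 'k poly) \<Rightarrow> bool" where
  "lin_op f \<longleftrightarrow> (\<forall>p q. f (p + q) = f p + f q) \<and> (\<forall>c p. f (smult c p) = smult c (f p))"

lemma lin_op_module_hom: "lin_op f \<Longrightarrow> module_hom smult smult f"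
  unfolding lin_op_def module_hom_iff by (simp add: pvs.module_axioms)

lemma lin_op_add: "lin_op f \<Longrightarrow> f (p + q) = f p + f q"
  by (simp add: lin_op_def)

lemma lin_op_smult: "lin_op f \<Longrightarrow> f (smult c p) = smult c (f p)"
  by (simp add: lin_op_def)

lemma lin_op_0: "lin_op f \<Longrightarrow> f 0 = 0"
  using module_hom.zero[OF lin_op_module_hom] by blast

lemma lin_op_diff: "lin_op f \<Longrightarrow> f (p - q) = f p - f q"
  using module_hom.diff[OF lin_op_module_hom] by blast

lemma lin_op_sum: "lin_op f \<Longrightarrow> f (sum g A) = (\<Sum>a\<in>A. f (g a))"
  using module_hom.sum[OF lin_op_module_hom] by blast

lemma lin_op_comp: "lin_op f \<Longrightarrow> lin_op g \<Longrightarrow> lin_op (\<lambda>p. f (g p))"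
  unfolding lin_op_def by simp

lemma lin_op_plus: "lin_op f \<Longrightarrow> lin_op g \<Longrightarrow> lin_op (\<lambda>p. f p + g p)"
  unfolding lin_op_def by (simp add: smult_add_right)

lemma lin_op_kernel_subspace: "lin_op f \<Longrightarrow> pvs.subspace (ker f)"
  unfolding ker_def using module_hom.subspace_kernel[OF lin_op_module_hom] .

lemma dim_span_insert_subspace:
  fixes S :: "'k::field poly set"
  assumes S: "pvs.subspace S" and B: "finite B" "S \<subseteq> pvs.span B" and w: "w \<notin> S"
  shows "pvs.dim (pvs.span (insert w S)) = pvs.dim S + 1"
proof -
  obtain C where C: "C \<subseteq> S" "pvs.independent C" "S \<subseteq> pvs.span C" "card C = pvs.dim S"
    using pvs.basis_exists by blast
  have fin_C: "finite C" using pvs.independent_span_bound[OF B(1) C(2)] C(1) B(2) by blast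
  have span_C: "pvs.span C = S" using C S by (metis pvs.span_subspace)
  have "card (insert w C) = pvs.dim (pvs.span (insert w S))"
  proof (rule pvs.basis_card_eq_dim)
    show "insert w C \<subseteq> pvs.span (insert w S)" using C(1) pvs.span_superset by blast
    have "insert w S \<subseteq> pvs.span (insert w C)"
      using span_C pvs.span_mono[of C "insert w C"] pvs.span_superset[of "insert w C"] by blast
    then show "pvs.span (insert w S) \<subseteq> pvs.span (insert w C)"
      using pvs.span_minimal pvs.subspace_span by blast
    show "pvs.independent (insert w C)"
      using pvs.independent_insertI[OF _ C(2)] w span_C by simp
  qed
  moreover have "w \<notin> C" using C(1) w by blast
  ultimately show ?thesis using fin_C C(4) by simp
qed

definition supplement :: "'k::field poly set \<Rightarrow> 'k poly set \<Rightarrow> bool" where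
  "supplement R B \<longleftrightarrow> finite B \<and> pvs.span (R \<union> B) = UNIV"

definition codim :: "'k::field poly set \<Rightarrow> nat" where
  "codim R = (LEAST n. \<exists>B. finite B \<and> card B = n \<and> pvs.span (R \<union> B) = UNIV)"

lemma dim_coker_eq_codim: "dim_coker a = codim (range a)"
  by (simp add: dim_coker_def codim_def)

lemma fin_dim_coker_iff: "fin_dim_coker a \<longleftrightarrow> (\<exists>B. supplement (range a) B)"
  by (simp add: fin_dim_coker_def supplement_def)

lemma codim_le: "supplement R B \<Longrightarrow> codim R \<le> card B"
  unfolding codim_def supplement_def by (rule Least_le) blast

lemma codim_attained:
  assumes "supplement R B" shows "\<exists>B'. supplement R B' \<and> card B' = codim R"
proof -
  have "\<exists>n B'. finite B' \<and> card B' = n \<and> pvs.span (R \<union> B') = UNIV"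
    using assms unfolding supplement_def by blast
  from LeastI_ex[OF this] show ?thesis unfolding codim_def supplement_def by blast
qed

lemma exchange:
  fixes S :: "'k::field poly set"
  assumes "finite B" "w \<in> pvs.span (S \<union> B)" "w \<notin> pvs.span S"
  shows "\<exists>b\<in>B. b \<in> pvs.span (insert w (S \<union> (B - {b})))"
  using assms
proof (induction B rule: finite_induct)
  case empty then show ?case by simp
next
  case (insert b B)
  show ?case
  proof (cases "w \<in> pvs.span (S \<union> B)")
    case True
    then obtain b' where "b' \<in> B" "b' \<in> pvs.span (insert w (S \<union> (B - {b'})))"
      using insert by blast
    moreover have "insert w (S \<union> (B - {b'})) \<subseteq> insert w (S \<union> (insert b B - {b'}))" by blast
    ultimately show ?thesis using pvs.span_mono by blast
  next
    case False
    have "w \<in> pvs.span (insert b (S \<union> B))" using insert.prems(1) by simp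
    then have "b \<in> pvs.span (insert w (S \<union> B))" using pvs.in_span_insert False by blast
    moreover have "insert b B - {b} = B" using insert.hyps(2) by blast
    ultimately show ?thesis by auto
  qed
qed

lemma span_span_insert_union:
  "pvs.span (pvs.span (insert w R) \<union> B) = pvs.span (R \<union> insert w B)"
proof -
  have "pvs.span (insert w R) \<union> B \<subseteq> pvs.span (insert w R \<union> B)"
    using pvs.span_mono[of "insert w R" "insert w R \<union> B"] pvs.span_superset by blast
  moreover have "insert w R \<union> B \<subseteq> pvs.span (pvs.span (insert w R) \<union> B)"
    using pvs.span_superset[of "pvs.span (insert w R) \<union> B"] pvs.span_superset[of "insert w R"]
    by blast
  ultimately have "pvs.span (pvs.span (insert w R) \<union> B) = pvs.span (insert w R \<union> B)"
    using pvs.span_eq by blast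
  moreover have "insert w R \<union> B = R \<union> insert w B" by blast
  ultimately show ?thesis by simp
qed

lemma supplement_shrink:
  fixes R :: "'k::field poly set"
  assumes R: "pvs.subspace R" and w: "w \<notin> R" and sup: "supplement R B"
  shows "\<exists>B'. supplement (pvs.span (insert w R)) B' \<and> card B' + 1 = card B"
proof -
  have fin_B: "finite B" and span_B: "pvs.span (R \<union> B) = UNIV"
    using sup by (simp_all add: supplement_def)
  have "w \<notin> pvs.span R" using R w by (metis pvs.span_eq_iff)
  then obtain b where b: "b \<in> B" "b \<in> pvs.span (R \<union> insert w (B - {b}))"
    using exchange[OF fin_B, of w R] span_B by (auto simp: insert_commute)
  have "R \<union> insert w B \<subseteq> pvs.span (R \<union> insert w (B - {b}))"
    using b(2) pvs.span_superset[of "R \<union> insert w (B - {b})"] by blast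
  then have "pvs.span (R \<union> insert w B) \<subseteq> pvs.span (R \<union> insert w (B - {b}))"
    using pvs.span_minimal pvs.subspace_span by blast
  moreover have "pvs.span (R \<union> B) \<subseteq> pvs.span (R \<union> insert w B)"
    by (rule pvs.span_mono) blast
  ultimately have "supplement (pvs.span (insert w R)) (B - {b})"
    using span_B fin_B by (auto simp: supplement_def span_span_insert_union)
  moreover have "card (B - {b}) + 1 = card B"
    using fin_B b(1) card_Diff_singleton[OF b(1)] card_gt_0_iff[of B] by fastforce
  ultimately show ?thesis by blast
qed

lemma codim_span_insert:
  fixes R :: "'k::field poly set"
  assumes R: "pvs.subspace R" and w: "w \<notin> R"
  shows "(\<exists>B. supplement R B) \<longleftrightarrow> (\<exists>B. supplement (pvs.span (insert w R)) B)"
    and "(\<exists>B. supplement R B) \<Longrightarrow> codim R = codim (pvs.span (insert w R)) + 1"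
proof -
  let ?R' = "pvs.span (insert w R)"
  have enlarge: "supplement ?R' B \<Longrightarrow> supplement R (insert w B)" for B
    by (simp add: supplement_def span_span_insert_union)
  show "(\<exists>B. supplement R B) \<longleftrightarrow> (\<exists>B. supplement ?R' B)"
    using enlarge supplement_shrink[OF R w] by blast
  assume "\<exists>B. supplement R B"
  then obtain B where B: "supplement R B" "card B = codim R" using codim_attained by blast
  obtain B' where B': "supplement ?R' B'" "card B' + 1 = card B"
    using supplement_shrink[OF R w B(1)] by blast
  obtain C where C: "supplement ?R' C" "card C = codim ?R'" using codim_attained B'(1) by blast
  have "codim R \<le> card (insert w C)" using codim_le enlarge[OF C(1)] by blast
  also have "\<dots> \<le> card C + 1" using C(1) by (simp add: supplement_def card_insert_if)
  finally show "codim R = codim ?R' + 1" using codim_le[OF B'(1)] B B' C by linarith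
qed

lemma hyperplane_decompose:
  fixes H :: "'k::field poly set"
  assumes H: "pvs.subspace H" and sp: "pvs.span (insert v H) = UNIV"
  obtains h k where "h \<in> H" "p = h + smult k v"
proof -
  have "p \<in> pvs.span (insert v H)" using sp by simp
  then obtain k where "p - smult k v \<in> pvs.span H" using pvs.span_breakdown_eq by blast
  then have "p - smult k v \<in> H" using H by (metis pvs.span_eq_iff)
  then show ?thesis using that[of "p - smult k v" k] by simp
qed

lemma range_via_hyperplane:
  assumes f: "lin_op f" and sp: "pvs.span (insert v H) = UNIV"
  shows "range f = pvs.span (insert (f v) (f ` H))"
  using module_hom.span_image[OF lin_op_module_hom[OF f], of "insert v H"] sp by simp

lemma ker_range_new_direction:
  fixes f :: "'k::field poly \<Rightarrow> 'k poly"
  assumes f: "lin_op f" and H: "pvs.subspace H"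
    and sp: "pvs.span (insert v H) = UNIV" and new: "f v \<notin> f ` H"
  shows "ker f \<subseteq> H"
proof -
  have "p \<in> H" if p: "p \<in> ker f" for p
  proof -
    obtain h k where hk: "h \<in> H" "p = h + smult k v" using hyperplane_decompose[OF H sp] by blast
    have fh: "f h = - smult k (f v)"
      using p hk f by (simp add: ker_def lin_op_add lin_op_smult eq_neg_iff_add_eq_0)
    have "k = 0"
    proof (rule ccontr)
      assume k: "k \<noteq> 0"
      have "f (smult (- inverse k) h) = smult (- inverse k) (f h)" by (rule lin_op_smult[OF f])
      also have "\<dots> = f v" using k by (simp add: fh)
      finally have "f (smult (- inverse k) h) = f v" .
      moreover have "smult (- inverse k) h \<in> H" using H hk(1) by (rule pvs.subspace_scale)
      ultimately show False using new by (metis image_eqI)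
    qed
    then show "p \<in> H" using hk by simp
  qed
  then show ?thesis by blast
qed

lemma ker_range_old_direction:
  fixes f :: "'k::field poly \<Rightarrow> 'k poly"
  assumes f: "lin_op f" and H: "pvs.subspace H"
    and sp: "pvs.span (insert v H) = UNIV" and h0: "h0 \<in> H" "f v = f h0"
  shows "ker f = pvs.span (insert (v - h0) (H \<inter> ker f))" and "range f = f ` H"
proof -
  have move: "h + smult k h0 \<in> H \<and> f (h + smult k h0) = f (h + smult k v)" if "h \<in> H" for h k
    using H that h0 f by (simp add: pvs.subspace_add pvs.subspace_scale lin_op_add lin_op_smult)
  show "ker f = pvs.span (insert (v - h0) (H \<inter> ker f))"
  proof
    have "insert (v - h0) (H \<inter> ker f) \<subseteq> ker f" using h0 f by (auto simp: ker_def lin_op_diff)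
    then show "pvs.span (insert (v - h0) (H \<inter> ker f)) \<subseteq> ker f"
      using pvs.span_minimal lin_op_kernel_subspace[OF f] by blast
    show "ker f \<subseteq> pvs.span (insert (v - h0) (H \<inter> ker f))"
    proof
      fix p assume p: "p \<in> ker f"
      obtain h k where hk: "h \<in> H" "p = h + smult k v" using hyperplane_decompose[OF H sp] by blast
      have "h + smult k h0 \<in> H \<inter> ker f" using move[OF hk(1)] p hk(2) by (simp add: ker_def)
      moreover have "p = (h + smult k h0) + smult k (v - h0)"
        using hk by (simp add: smult_diff_right)
      ultimately show "p \<in> pvs.span (insert (v - h0) (H \<inter> ker f))"
        by (metis pvs.span_add pvs.span_base pvs.span_scale insertI1 insertI2)
    qed
  qed
  show "range f = f ` H"
  proof (intro equalityI subsetI)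
    fix y assume "y \<in> range f"
    then obtain h k where "h \<in> H" "y = f (h + smult k v)"
      using hyperplane_decompose[OF H sp] by (metis rangeE)
    then show "y \<in> f ` H" using move by (metis image_eqI)
  qed auto
qed

lemma index_via_hyperplane:
  fixes f :: "'k::field poly \<Rightarrow> 'k poly"
  assumes f: "lin_op f" and H: "pvs.subspace H" and v: "v \<notin> H"
    and sp: "pvs.span (insert v H) = UNIV"
  shows "fin_dim_ker f \<longleftrightarrow> (\<exists>B. finite B \<and> H \<inter> ker f \<subseteq> pvs.span B)"
    and "fin_dim_coker f \<longleftrightarrow> (\<exists>B. supplement (f ` H) B)"
    and "fin_dim_ker f \<Longrightarrow> fin_dim_coker f \<Longrightarrow>
           ind f = int (pvs.dim (H \<inter> ker f)) - int (codim (f ` H)) + 1"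
proof -
  have kH: "pvs.subspace (H \<inter> ker f)"
    using pvs.subspace_inter[OF H lin_op_kernel_subspace[OF f]] .
  have fH: "pvs.subspace (f ` H)"
    using module_hom.subspace_image[OF lin_op_module_hom[OF f] H] .
  have "(fin_dim_ker f \<longleftrightarrow> (\<exists>B. finite B \<and> H \<inter> ker f \<subseteq> pvs.span B))
      \<and> (fin_dim_coker f \<longleftrightarrow> (\<exists>B. supplement (f ` H) B))
      \<and> (fin_dim_ker f \<longrightarrow> fin_dim_coker f \<longrightarrow>
           ind f = int (pvs.dim (H \<inter> ker f)) - int (codim (f ` H)) + 1)"
  proof (cases "f v \<in> f ` H")
    case False
    (* the kernel lies in H, and the image is f(H) plus one new dimension *)
    have ker: "H \<inter> ker f = ker f" using ker_range_new_direction[OF f H sp False] by blast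
    show ?thesis
      using codim_span_insert[OF fH False] unfolding range_via_hyperplane[OF f sp, symmetric] ker
      by (auto simp: fin_dim_ker_def fin_dim_coker_iff ind_def dim_coker_eq_codim)
  next
    case True
    (* the image is f(H), and the kernel gains the new direction v - h0 *)
    then obtain h0 where h0: "h0 \<in> H" "f v = f h0" by blast
    note ker = ker_range_old_direction(1)[OF f H sp h0]
      and rng = ker_range_old_direction(2)[OF f H sp h0]
    have w: "v - h0 \<notin> H \<inter> ker f"
      using v h0(1) H by (metis Int_iff diff_add_cancel pvs.subspace_add)
    have fin_ker: "fin_dim_ker f \<longleftrightarrow> (\<exists>B. finite B \<and> H \<inter> ker f \<subseteq> pvs.span B)"
    proof
      assume "\<exists>B. finite B \<and> H \<inter> ker f \<subseteq> pvs.span B"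
      then obtain B where "finite B" "H \<inter> ker f \<subseteq> pvs.span B" by blast
      then have "insert (v - h0) (H \<inter> ker f) \<subseteq> pvs.span (insert (v - h0) B)"
        using pvs.span_mono[of B "insert (v - h0) B"] pvs.span_base[of "v - h0"] by blast
      then have "ker f \<subseteq> pvs.span (insert (v - h0) B)"
        using pvs.span_minimal[OF _ pvs.subspace_span] ker by metis
      with \<open>finite B\<close> show "fin_dim_ker f" unfolding fin_dim_ker_def by blast
    qed (auto simp: fin_dim_ker_def)
    have "fin_dim_ker f \<Longrightarrow> pvs.dim (ker f) = pvs.dim (H \<inter> ker f) + 1"
      using fin_ker dim_span_insert_subspace[OF kH _ _ w] ker by metis
    then show ?thesis using fin_ker rng
      by (auto simp: fin_dim_coker_iff ind_def dim_coker_eq_codim)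
  qed
  then show "fin_dim_ker f \<longleftrightarrow> (\<exists>B. finite B \<and> H \<inter> ker f \<subseteq> pvs.span B)"
    and "fin_dim_coker f \<longleftrightarrow> (\<exists>B. supplement (f ` H) B)"
    and "fin_dim_ker f \<Longrightarrow> fin_dim_coker f \<Longrightarrow>
           ind f = int (pvs.dim (H \<inter> ker f)) - int (codim (f ` H)) + 1" by blast+
qed

lemma index_agree_on_hyperplane:
  fixes f g :: "'k::field poly \<Rightarrow> 'k poly"
  assumes f: "lin_op f" and g: "lin_op g" and H: "pvs.subspace H" and v: "v \<notin> H"
    and sp: "pvs.span (insert v H) = UNIV" and eq: "\<And>p. p \<in> H \<Longrightarrow> f p = g p"
  shows "fin_dim_ker f = fin_dim_ker g" and "fin_dim_coker f = fin_dim_coker g"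
    and "fin_dim_ker f \<Longrightarrow> fin_dim_coker f \<Longrightarrow> ind f = ind g"
proof -
  have k: "H \<inter> ker f = H \<inter> ker g" using eq by (auto simp: ker_def)
  have i: "f ` H = g ` H" using eq by (auto simp: image_def)
  note F = index_via_hyperplane[OF f H v sp] and G = index_via_hyperplane[OF g H v sp]
  show "fin_dim_ker f = fin_dim_ker g" and "fin_dim_coker f = fin_dim_coker g"
    using F(1,2) G(1,2) k i by simp_all
  then show "fin_dim_ker f \<Longrightarrow> fin_dim_coker f \<Longrightarrow> ind f = ind g"
    using F(3) G(3) k i by simp
qed

definition vanishes_below :: "nat \<Rightarrow> 'k::zero poly \<Rightarrow> bool" where
  "vanishes_below N p \<longleftrightarrow> (\<forall>i<N. coeff p i = 0)"

lemma vanishes_below_mono: "vanishes_below N p \<Longrightarrow> M \<le> N \<Longrightarrow> vanishes_below M p"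
  by (auto simp: vanishes_below_def)

definition coeff_hyperplane :: "nat \<Rightarrow> 'k::field poly set" where
  "coeff_hyperplane k = {p. coeff p k = 0}"

lemma coeff_hyperplane_subspace: "pvs.subspace (coeff_hyperplane k)"
  by (rule pvs.subspaceI) (auto simp: coeff_hyperplane_def)

lemma monom_notin_coeff_hyperplane: "(monom 1 k :: 'k::field poly) \<notin> coeff_hyperplane k"
  by (simp add: coeff_hyperplane_def)

lemma span_monom_coeff_hyperplane:
  "pvs.span (insert (monom 1 k) (coeff_hyperplane k :: 'k::field poly set)) = UNIV"
proof -
  have "p - smult (coeff p k) (monom 1 k) \<in> pvs.span (coeff_hyperplane k)" for p :: "'k poly"
    by (rule pvs.span_base) (simp add: coeff_hyperplane_def)
  then show ?thesis using pvs.span_breakdown_eq by blast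
qed

text \<open>Operators that agree on all multiples of x^N have the same index: walk from b to a
  through the operators g_k that act as a on x^k K[x] and as b on polynomials of degree < k;
  consecutive ones agree on the hyperplane coeff_k = 0.\<close>

lemma index_agree_on_multiples:
  fixes a b :: "'k::field poly \<Rightarrow> 'k poly"
  assumes a: "lin_op a" and b: "lin_op b"
    and eq: "\<And>p. vanishes_below N p \<Longrightarrow> a p = b p"
    and fin_b: "fin_dim_ker b" "fin_dim_coker b"
  shows "fin_dim_ker a \<and> fin_dim_coker a \<and> ind a = ind b"
proof -
  define g where "g k p = a (p - poly_cutoff k p) + b (poly_cutoff k p)" for k p
  have lin_cutoff: "lin_op (poly_cutoff k)" and lin_rest: "lin_op (\<lambda>p. p - poly_cutoff k p)" for k
    unfolding lin_op_def by (auto simp: poly_eq_iff coeff_poly_cutoff algebra_simps)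
  have lin_g: "lin_op (g k)" for k
    unfolding g_def[abs_def] using lin_op_plus lin_op_comp a b lin_cutoff lin_rest by blast
  have "poly_cutoff 0 p = 0" for p :: "'k poly" by (simp add: poly_eq_iff coeff_poly_cutoff)
  then have g0: "g 0 = a" by (simp add: g_def lin_op_0[OF b] fun_eq_iff)
  have gN: "g N = b"
  proof
    fix p :: "'k poly"
    have "a (p - poly_cutoff N p) = b (p - poly_cutoff N p)"
      by (rule eq) (simp add: vanishes_below_def coeff_poly_cutoff)
    then show "g N p = b p" by (simp add: g_def lin_op_diff[OF b])
  qed
  have g_step: "g k p = g (Suc k) p" if "p \<in> coeff_hyperplane k" for k p
  proof -
    have "poly_cutoff (Suc k) p = poly_cutoff k p"
      using that by (auto simp: poly_eq_iff coeff_poly_cutoff coeff_hyperplane_def less_Suc_eq)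
    then show ?thesis by (simp add: g_def)
  qed
  have "fin_dim_ker (g k) \<and> fin_dim_coker (g k) \<and> ind (g k) = ind b" if "k \<le> N" for k
    using that
  proof (induction k rule: inc_induct)
    case base then show ?case using gN fin_b by simp
  next
    case (step k)
    show ?case
      using index_agree_on_hyperplane[OF lin_g[of k] lin_g[of "Suc k"] coeff_hyperplane_subspace
          monom_notin_coeff_hyperplane span_monom_coeff_hyperplane g_step] step.IH
      by simp
  qed
  then show ?thesis using g0 by force
qed

definition deg_below :: "nat \<Rightarrow> 'k::field poly set" where
  "deg_below k = {p. \<forall>i\<ge>k. coeff p i = 0}"

lemma deg_below_subspace: "pvs.subspace (deg_below k)"
  by (rule pvs.subspaceI) (auto simp: deg_below_def)

lemma deg_below_0: "deg_below 0 = {0}"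
  by (auto simp: deg_below_def poly_eq_iff)

lemma deg_below_mono: "deg_below k \<subseteq> deg_below (Suc k)"
  unfolding deg_below_def by auto

lemma drop_top_coeff:
  "p \<in> deg_below (Suc k) \<Longrightarrow> p - smult (coeff p k) (monom 1 k) \<in> deg_below k"
  by (auto simp: deg_below_def coeff_monom le_Suc_eq)

lemma deg_below_Suc:
  "pvs.span (insert (monom 1 k) (deg_below k)) = (deg_below (Suc k) :: 'k::field poly set)"
proof
  have "insert (monom 1 k) (deg_below k) \<subseteq> (deg_below (Suc k) :: 'k poly set)"
    using deg_below_mono by (auto simp: deg_below_def coeff_monom)
  then show "pvs.span (insert (monom 1 k) (deg_below k)) \<subseteq> (deg_below (Suc k) :: 'k poly set)"
    by (rule pvs.span_minimal[OF _ deg_below_subspace])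
  show "deg_below (Suc k) \<subseteq> pvs.span (insert (monom 1 k) (deg_below k :: 'k poly set))"
    using drop_top_coeff pvs.span_base pvs.span_breakdown_eq by blast
qed

lemma dim_zero_space: "pvs.dim ({0} :: 'k::field poly set) = 0"
  using pvs.basis_card_eq_dim[of "{}" "{0 :: 'k poly}"] pvs.independent_empty by simp

lemma dim_deg_below:
  "pvs.dim (deg_below k :: 'k::field poly set) = k
     \<and> (\<exists>B. finite B \<and> (deg_below k :: 'k poly set) \<subseteq> pvs.span B)"
proof (induction k)
  case 0 show ?case by (auto simp: deg_below_0 dim_zero_space intro: pvs.span_zero)
next
  case (Suc k)
  then obtain B where B: "finite B" "(deg_below k :: 'k poly set) \<subseteq> pvs.span B" by blast
  have "monom 1 k \<notin> (deg_below k :: 'k poly set)" by (simp add: deg_below_def)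
  from dim_span_insert_subspace[OF deg_below_subspace B this]
  have "pvs.dim (deg_below (Suc k) :: 'k poly set) = Suc k"
    using Suc.IH by (simp only: deg_below_Suc)
  moreover have "(deg_below (Suc k) :: 'k poly set) \<subseteq> pvs.span (insert (monom 1 k) B)"
    unfolding deg_below_Suc[symmetric]
    using B(2) pvs.span_mono[of B "insert (monom 1 k) B"] pvs.span_base[of "monom 1 k"]
    by (intro pvs.span_minimal[OF _ pvs.subspace_span]) blast
  ultimately show ?case using B(1) by blast
qed
text \<open>The subspaces q K[x] + (polynomials of degree < k); for k = 0 this is the ideal (q),
  for k = deg q it is everything (division with remainder), and each step adds one dimension.\<close>

definition multiples_plus :: "'k::field poly \<Rightarrow> nat \<Rightarrow> 'k poly set" where
  "multiples_plus q k = {q * r + s | r s. s \<in> deg_below k}"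

lemma multiples_plus_subspace: "pvs.subspace (multiples_plus q k)"
proof (rule pvs.subspaceI)
  show "0 \<in> multiples_plus q k" unfolding multiples_plus_def
    by (intro CollectI exI[of _ 0] exI[of _ 0]) (simp add: deg_below_def)
  fix x y assume "x \<in> multiples_plus q k" "y \<in> multiples_plus q k"
  then obtain r s r' s' where "x = q * r + s" "s \<in> deg_below k" "y = q * r' + s'" "s' \<in> deg_below k"
    unfolding multiples_plus_def by blast
  then show "x + y \<in> multiples_plus q k" unfolding multiples_plus_def
    by (intro CollectI exI[of _ "r + r'"] exI[of _ "s + s'"])
       (auto simp: algebra_simps pvs.subspace_add[OF deg_below_subspace])
next
  fix c x assume "x \<in> multiples_plus q k"
  then obtain r s where "x = q * r + s" "s \<in> deg_below k" unfolding multiples_plus_def by blast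
  then show "smult c x \<in> multiples_plus q k" unfolding multiples_plus_def
    by (intro CollectI exI[of _ "smult c r"] exI[of _ "smult c s"])
       (auto simp: smult_add_right pvs.subspace_scale[OF deg_below_subspace])
qed

lemma multiples_plus_Suc:
  "pvs.span (insert (monom 1 k) (multiples_plus q k)) = multiples_plus q (Suc k)"
proof
  have "monom 1 k \<in> multiples_plus q (Suc k)" unfolding multiples_plus_def
    by (intro CollectI exI[of _ 0] exI[of _ "monom 1 k"]) (simp add: deg_below_def coeff_monom)
  moreover have "multiples_plus q k \<subseteq> multiples_plus q (Suc k)"
    unfolding multiples_plus_def using deg_below_mono by blast
  ultimately have "insert (monom 1 k) (multiples_plus q k) \<subseteq> multiples_plus q (Suc k)" by blast
  then show "pvs.span (insert (monom 1 k) (multiples_plus q k)) \<subseteq> multiples_plus q (Suc k)"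
    by (rule pvs.span_minimal[OF _ multiples_plus_subspace])
  show "multiples_plus q (Suc k) \<subseteq> pvs.span (insert (monom 1 k) (multiples_plus q k))"
  proof
    fix p assume "p \<in> multiples_plus q (Suc k)"
    then obtain r s where rs: "p = q * r + s" "s \<in> deg_below (Suc k)"
      unfolding multiples_plus_def by blast
    then have "p - smult (coeff s k) (monom 1 k) \<in> multiples_plus q k"
      using drop_top_coeff[OF rs(2)] unfolding multiples_plus_def by force
    then show "p \<in> pvs.span (insert (monom 1 k) (multiples_plus q k))"
      using pvs.span_base pvs.span_breakdown_eq by blast
  qed
qed

lemma monom_notin_multiples_plus:
  assumes "k < degree q" shows "monom 1 k \<notin> multiples_plus q k"
proof
  assume "monom 1 k \<in> multiples_plus q k"
  then obtain r s where rs: "monom 1 k = q * r + s" "s \<in> deg_below k"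
    unfolding multiples_plus_def by blast
  show False
  proof (cases "r = 0")
    case True
    then have "s = monom 1 k" using rs(1) by simp
    then have "coeff s k = 1" by simp
    then show False using rs(2) by (auto simp: deg_below_def)
  next
    case False
    have "q \<noteq> 0" using assms by auto
    then have "degree q \<le> degree (q * r)" using False by (simp add: degree_mult_eq)
    moreover have "q * r = monom 1 k - s" using rs(1) by simp
    moreover have "degree (monom 1 k - s) \<le> k"
      using rs(2) by (intro degree_le) (auto simp: deg_below_def coeff_monom)
    ultimately have "degree q \<le> k" by simp
    then show False using assms by linarith
  qed
qed

lemma multiples_plus_degree:
  assumes q: "q \<noteq> 0" shows "multiples_plus q (degree q) = UNIV"
proof -
  have "p = q * (p div q) + p mod q" and "p mod q \<in> deg_below (degree q)" for p
    using degree_mod_less[OF q, of p] by (auto simp: deg_below_def intro: coeff_eq_0)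
  then show ?thesis unfolding multiples_plus_def by blast
qed

lemma codim_multiples_plus:
  assumes q: "q \<noteq> 0" and k: "k \<le> degree q"
  shows "(\<exists>B. supplement (multiples_plus q k) B) \<and> codim (multiples_plus q k) = degree q - k"
  using k
proof (induction k rule: inc_induct)
  case base
  have "supplement (multiples_plus q (degree q)) {}"
    by (simp add: supplement_def multiples_plus_degree[OF q])
  then show ?case using codim_le by fastforce
next
  case (step k)
  note C = codim_span_insert[OF multiples_plus_subspace monom_notin_multiples_plus[OF step(2)],
      unfolded multiples_plus_Suc]
  show ?case using C step.IH step(2) by auto
qed

definition model_op :: "'k::field poly \<Rightarrow> nat \<Rightarrow> 'k poly \<Rightarrow> 'k poly" where
  "model_op q N p = q * poly_shift N p"

lemma lin_op_model_op: "lin_op (model_op (q :: 'k::field poly) N)"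
proof -
  have "poly_shift N (p + p') = poly_shift N p + poly_shift N p'"
    and "poly_shift N (smult c p) = smult c (poly_shift N p)" for p p' :: "'k poly" and c
    by (simp_all add: poly_eq_iff coeff_poly_shift)
  then show ?thesis unfolding lin_op_def model_op_def by (simp add: distrib_left)
qed

lemma ker_model_op:
  fixes q :: "'k::field poly" assumes q: "q \<noteq> 0" shows "ker (model_op q N) = deg_below N"
proof -
  have "model_op q N p = 0 \<longleftrightarrow> poly_shift N p = 0" for p
    using q by (simp add: model_op_def)
  moreover have "poly_shift N p = 0 \<longleftrightarrow> (\<forall>i. coeff p (i + N) = 0)" for p
    by (simp add: poly_eq_iff coeff_poly_shift)
  moreover have "(\<forall>i. coeff p (i + N) = 0) \<longleftrightarrow> (\<forall>i\<ge>N. coeff p i = 0)" for p :: "'k poly"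
  proof
    assume "\<forall>i. coeff p (i + N) = 0"
    then show "\<forall>i\<ge>N. coeff p i = 0" by (metis le_add_diff_inverse2)
  qed simp
  ultimately show ?thesis unfolding ker_def deg_below_def by blast
qed

lemma range_model_op: "range (model_op q N) = multiples_plus (q :: 'k::field poly) 0"
proof -
  have "poly_shift N (monom 1 N * r) = r" for r :: "'k poly"
    by (simp add: poly_eq_iff coeff_poly_shift coeff_monom_mult)
  then have "model_op q N (monom 1 N * r) = q * r" for r by (simp add: model_op_def)
  then have "q * r \<in> range (model_op q N)" for r by (metis rangeI)
  then show ?thesis unfolding multiples_plus_def deg_below_0
    by (auto simp: model_op_def)
qed

lemma index_model_op:
  fixes q :: "'k::field poly" assumes q: "q \<noteq> 0"
  shows "fin_dim_ker (model_op q N) \<and> fin_dim_coker (model_op q N)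
           \<and> ind (model_op q N) = int N - int (degree q)"
proof -
  note K = ker_model_op[OF q, of N] and R = range_model_op[of q N]
    and C = codim_multiples_plus[OF q, of 0]
  have D: "pvs.dim (deg_below N :: 'k poly set) = N
      \<and> (\<exists>B. finite B \<and> (deg_below N :: 'k poly set) \<subseteq> pvs.span B)"
    by (rule dim_deg_below)
  have "fin_dim_ker (model_op q N)" using D by (simp add: fin_dim_ker_def K)
  moreover have "fin_dim_coker (model_op q N)" using C by (simp add: fin_dim_coker_iff R)
  moreover have "ind (model_op q N) = int N - int (degree q)"
    using C D by (simp add: ind_def dim_coker_eq_codim K R)
  ultimately show ?thesis by blast
qed

lemma index_eventually_model:
  fixes a :: "'k::field poly \<Rightarrow> 'k poly"
  assumes a: "lin_op a" and q: "q \<noteq> 0"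
    and eq: "\<And>p. vanishes_below N p \<Longrightarrow> a p = q * poly_shift N p"
  shows "fin_dim_ker a \<and> fin_dim_coker a \<and> ind a = int N - int (degree q)"
proof -
  note model = index_model_op[OF q, of N]
  have "fin_dim_ker a \<and> fin_dim_coker a \<and> ind a = ind (model_op q N)"
    using eq model
    by (intro index_agree_on_multiples[OF a lin_op_model_op]) (auto simp: model_op_def)
  with model show ?thesis by simp
qed

definition fls_of_poly :: "'k::field poly \<Rightarrow> 'k fls" where
  "fls_of_poly p = fps_to_fls (fps_of_poly p)"

lemma fls_of_poly_nth: "fls_nth (fls_of_poly p) n = (if n < 0 then 0 else coeff p (nat n))"
  by (simp add: fls_of_poly_def)

lemma fls_of_poly_add: "fls_of_poly (p + q) = fls_of_poly p + fls_of_poly q"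
  by (simp add: fls_of_poly_def fps_of_poly_add)

lemma fls_of_poly_smult: "fls_of_poly (smult c p) = fls_const c * fls_of_poly p"
  by (rule fls_eqI) (simp add: fls_of_poly_nth)

lemma fls_of_poly_mult: "fls_of_poly (p * q) = fls_of_poly p * fls_of_poly q"
  by (simp add: fls_of_poly_def fps_of_poly_mult fls_times_fps_to_fls)

lemma fls_of_poly_inj: "fls_of_poly p = fls_of_poly q \<longleftrightarrow> p = q"
  by (simp add: fls_of_poly_def fps_of_poly_eq_iff)

lemma fls_of_poly_0 [simp]: "fls_of_poly 0 = 0"
  by (simp add: fls_of_poly_def)

lemma fls_of_poly_eq_0: "fls_of_poly p = 0 \<longleftrightarrow> p = 0"
  using fls_of_poly_inj[of p 0] by simp

lemma fls_of_poly_one: "fls_of_poly 1 = 1"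
  by (simp add: fls_of_poly_def)

lemma fls_of_poly_sum: "fls_of_poly (\<Sum>x\<in>A. f x) = (\<Sum>x\<in>A. fls_of_poly (f x))"
  by (induction A rule: infinite_finite_induct) (auto simp: fls_of_poly_add)

lemma fls_of_poly_shift:
  "vanishes_below j p \<Longrightarrow> fls_of_poly (poly_shift j p) = fls_shift (int j) (fls_of_poly p)"
proof (rule fls_eqI)
  fix n assume l: "vanishes_below j p"
  show "fls_nth (fls_of_poly (poly_shift j p)) n = fls_nth (fls_shift (int j) (fls_of_poly p)) n"
  proof (cases "n < 0")
    case True
    show ?thesis
    proof (cases "n + int j < 0")
      case False
      then have "nat (n + int j) < j" using True by linarith
      then have "coeff p (nat (n + int j)) = 0" using l by (simp add: vanishes_below_def)
      then show ?thesis using True False by (simp add: fls_of_poly_nth)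
    qed (use True in \<open>simp add: fls_of_poly_nth\<close>)
  next
    case False
    then have "nat (n + int j) = nat n + j" by linarith
    then show ?thesis using False by (simp add: fls_of_poly_nth coeff_poly_shift)
  qed
qed

lemma fls_of_poly_monom_mult: "fls_of_poly (monom 1 i * p) = fls_shift (- int i) (fls_of_poly p)"
proof (rule fls_eqI)
  fix n
  show "fls_nth (fls_of_poly (monom 1 i * p)) n = fls_nth (fls_shift (- int i) (fls_of_poly p)) n"
  proof (cases "n < 0")
    case True then show ?thesis by (simp add: fls_of_poly_nth)
  next
    case False
    show ?thesis
    proof (cases "nat n < i")
      case True then show ?thesis using False by (simp add: fls_of_poly_nth coeff_monom_mult)
    next
      case F2: False
      then have "nat (n - int i) = nat n - i" by linarith
      then show ?thesis using False F2 by (simp add: fls_of_poly_nth coeff_monom_mult)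
    qed
  qed
qed

lemma lin_op_opX: "lin_op (opX :: 'k::field_char_0 poly \<Rightarrow> 'k poly)"
  unfolding lin_op_def opX_def by simp

lemma lin_op_opY: "lin_op (opY :: 'k::field_char_0 poly \<Rightarrow> 'k poly)"
  unfolding lin_op_def opY_def by (simp add: poly_eq_iff coeff_poly_shift)

lemma opY_opX: "opY \<circ> opX = (id :: 'k::field_char_0 poly \<Rightarrow> 'k poly)"
  by (simp add: fun_eq_iff opX_def opY_def poly_eq_iff coeff_poly_shift)

lemma opX_pow: "(opX ^^ i) p = monom 1 i * p"
proof (induction i arbitrary: p)
  case 0 then show ?case by simp
next
  case (Suc i)
  have "(opX ^^ Suc i) p = pCons 0 (monom 1 i * p)" by (simp add: Suc opX_def)
  also have "\<dots> = monom 1 (Suc i) * p"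
    by (simp add: poly_eq_iff coeff_monom_mult coeff_pCons split: nat.split)
  finally show ?case .
qed

lemma opY_pow: "(opY ^^ j) p = poly_shift j p"
proof (induction j arbitrary: p)
  case 0 then show ?case by simp
next
  case (Suc j)
  have "(opY ^^ Suc j) p = poly_shift 1 (poly_shift j p)" by (simp add: Suc opY_def)
  also have "\<dots> = poly_shift (Suc j) p" by (simp add: poly_eq_iff coeff_poly_shift)
  finally show ?case .
qed

lemma xy_eq: "xy i j p = monom 1 i * poly_shift j p"
  by (simp add: xy_def opX_pow opY_pow)

lemma opX_eq_xy: "opX = (xy 1 0 :: 'k::field_char_0 poly \<Rightarrow> 'k poly)"
  by (simp add: fun_eq_iff xy_def)

lemma opX_xy: "opX (xy i j p) = xy (Suc i) j p"
  by (simp add: xy_def)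

lemma opY_xy: "opY (xy i j p) = xy (i - 1) (if i = 0 then Suc j else j) p"
  by (auto simp: xy_eq opY_def poly_eq_iff coeff_poly_shift coeff_monom_mult)

lemma fls_of_poly_xy:
  "vanishes_below j p \<Longrightarrow> fls_of_poly (xy i j p) = fls_X_intpow (int i - int j) * fls_of_poly p"
  using fls_X_intpow_times_conv_shift(1)[of "int i - int j" "fls_of_poly p"]
  by (simp add: xy_eq fls_of_poly_monom_mult fls_of_poly_shift)

text \<open>An operator a "acts as u beyond N" if on the multiples of x^N it is multiplication by the
  Laurent series u. This is how the symbol a-bar is read off from a.\<close>

definition acts_as :: "('k::field_char_0 poly \<Rightarrow> 'k poly) \<Rightarrow> 'k fls \<Rightarrow> nat \<Rightarrow> bool" where
  "acts_as a u N \<longleftrightarrow> (\<forall>p. vanishes_below N p \<longrightarrow> fls_of_poly (a p) = u * fls_of_poly p)"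

lemma acts_as_unique:
  assumes "acts_as a u N" "acts_as a w M" shows "u = w"
proof -
  define p :: "'a poly" where "p = monom 1 (max N M)"
  have "vanishes_below N p" "vanishes_below M p"
    by (auto simp: vanishes_below_def p_def coeff_monom)
  then have "u * fls_of_poly p = w * fls_of_poly p" using assms by (metis acts_as_def)
  moreover have "fls_of_poly p \<noteq> 0" by (simp add: fls_of_poly_eq_0 p_def)
  ultimately show ?thesis by simp
qed

definition y_bound :: "(nat \<Rightarrow> nat \<Rightarrow> 'k::zero) \<Rightarrow> nat" where
  "y_bound c = (\<Sum>x\<in>supp2 c. snd x)"

lemma y_bound_ge: "finite (supp2 c) \<Longrightarrow> (i, j) \<in> supp2 c \<Longrightarrow> j \<le> y_bound c"
  unfolding y_bound_def using member_le_sum[of "(i,j)" "supp2 c" snd] by simp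

lemma acts_as_xy_comb:
  assumes fin: "finite (supp2 c)"
  shows "acts_as (xy_comb c) (laurent_comb c) (y_bound c)"
  unfolding acts_as_def
proof (intro allI impI)
  fix p :: "'a poly" assume l: "vanishes_below (y_bound c) p"
  have "fls_of_poly (xy_comb c p) =
      (\<Sum>x\<in>supp2 c. fls_of_poly (smult (c (fst x) (snd x)) (xy (fst x) (snd x) p)))"
    unfolding xy_comb_def by (simp add: fls_of_poly_sum case_prod_beta)
  also have "\<dots> = (\<Sum>x\<in>supp2 c.
      fls_const (c (fst x) (snd x)) * fls_X_intpow (int (fst x) - int (snd x)) * fls_of_poly p)"
  proof (rule sum.cong)
    fix x assume x: "x \<in> supp2 c"
    have "vanishes_below (snd x) p"
      using l y_bound_ge[OF fin, of "fst x" "snd x"] x vanishes_below_mono by simp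
    then show "fls_of_poly (smult (c (fst x) (snd x)) (xy (fst x) (snd x) p)) =
      fls_const (c (fst x) (snd x)) * fls_X_intpow (int (fst x) - int (snd x)) * fls_of_poly p"
      by (simp add: fls_of_poly_smult fls_of_poly_xy mult.assoc)
  qed simp
  also have "\<dots> = laurent_comb c * fls_of_poly p"
    unfolding laurent_comb_def by (simp add: sum_distrib_right case_prod_beta)
  finally show "fls_of_poly (xy_comb c p) = laurent_comb c * fls_of_poly p" .
qed


text \<open>Every element of S_1 is a finite combination of the monomials x^i y^j: the combinations
  contain 1 and are closed under sums, scalars and left multiplication by x and y.\<close>

definition xy_span :: "('k::field_char_0 poly \<Rightarrow> 'k poly) \<Rightarrow> bool" where
  "xy_span a \<longleftrightarrow> (\<exists>c. finite (supp2 c) \<and> a = xy_comb c)"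

lemma xy_comb_superset:
  assumes "finite S" "supp2 c \<subseteq> S"
  shows "xy_comb c p = (\<Sum>(i, j)\<in>S. smult (c i j) (xy i j p))"
  unfolding xy_comb_def
  by (rule sum.mono_neutral_left[OF assms(1,2)]) (auto simp: supp2_def)

lemma xy_span_zero: "xy_span (\<lambda>p. 0)"
proof -
  have "supp2 (\<lambda>i j. 0 :: 'a) = {}" by (simp add: supp2_def)
  then show ?thesis unfolding xy_span_def xy_comb_def by (intro exI[of _ "\<lambda>i j. 0"]) simp
qed

lemma xy_span_add:
  assumes "xy_span a" "xy_span b" shows "xy_span (\<lambda>p. a p + b p)"
proof -
  obtain c where c: "finite (supp2 c)" "a = xy_comb c" using assms(1) xy_span_def by blast
  obtain d where d: "finite (supp2 d)" "b = xy_comb d" using assms(2) xy_span_def by blast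
  define e where "e i j = c i j + d i j" for i j
  define S where "S = supp2 c \<union> supp2 d"
  have fS: "finite S" using c d by (simp add: S_def)
  have eS: "supp2 e \<subseteq> S" by (auto simp: supp2_def S_def e_def)
  have "(\<lambda>p. a p + b p) = xy_comb e"
  proof
    fix p
    have "a p = (\<Sum>(i, j)\<in>S. smult (c i j) (xy i j p))"
      using c by (simp add: xy_comb_superset[OF fS] S_def)
    moreover have "b p = (\<Sum>(i, j)\<in>S. smult (d i j) (xy i j p))"
      using d by (simp add: xy_comb_superset[OF fS] S_def)
    moreover have "xy_comb e p = (\<Sum>(i, j)\<in>S. smult (e i j) (xy i j p))"
      by (rule xy_comb_superset[OF fS eS])
    ultimately show "a p + b p = xy_comb e p"
      by (simp add: e_def smult_add_left sum.distrib case_prod_beta)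
  qed
  moreover have "finite (supp2 e)" using fS eS finite_subset by blast
  ultimately show ?thesis unfolding xy_span_def by blast
qed

lemma xy_span_smult:
  assumes "xy_span a" shows "xy_span (\<lambda>p. smult k (a p))"
proof -
  obtain c where c: "finite (supp2 c)" "a = xy_comb c" using assms(1) xy_span_def by blast
  define e where "e i j = k * c i j" for i j
  have eS: "supp2 e \<subseteq> supp2 c" by (auto simp: supp2_def e_def)
  have "(\<lambda>p. smult k (a p)) = xy_comb e"
  proof
    fix p
    have "xy_comb e p = (\<Sum>(i, j)\<in>supp2 c. smult (e i j) (xy i j p))"
      by (rule xy_comb_superset[OF c(1) eS])
    then show "smult k (a p) = xy_comb e p"
      using c by (simp add: e_def xy_comb_def pvs.scale_sum_right case_prod_beta)
  qed
  moreover have "finite (supp2 e)" using c eS finite_subset by blast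
  ultimately show ?thesis unfolding xy_span_def by blast
qed

lemma xy_span_sum:
  assumes "finite A" "\<forall>s\<in>A. xy_span (f s)" shows "xy_span (\<lambda>p. \<Sum>s\<in>A. f s p)"
  using assms
proof (induction A rule: finite_induct)
  case empty then show ?case using xy_span_zero by simp
next
  case (insert x A)
  have "xy_span (\<lambda>p. f x p + (\<Sum>s\<in>A. f s p))"
    using insert by (intro xy_span_add) auto
  then show ?case using insert by simp
qed

lemma xy_span_xy: "xy_span (\<lambda>p. smult k (xy i j p))"
proof -
  define c where "c a b = (if a = i \<and> b = j then (1::'a) else 0)" for a b
  have s: "supp2 c = {(i, j)}" by (auto simp: supp2_def c_def)
  have "xy_span (xy_comb c)" unfolding xy_span_def using s by (intro exI[of _ c]) simp
  moreover have "xy_comb c = xy i j" unfolding xy_comb_def s by (simp add: c_def)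
  ultimately show ?thesis using xy_span_smult by simp
qed

lemma xy_comb_alt: "xy_comb c p = (\<Sum>s\<in>supp2 c. smult (c (fst s) (snd s)) (xy (fst s) (snd s) p))"
  unfolding xy_comb_def by (simp add: case_prod_beta)

lemma xy_span_left:
  assumes l: "lin_op h" and b: "xy_span b"
    and h: "\<And>i j. xy_span (\<lambda>p. h (xy i j p))"
  shows "xy_span (h \<circ> b)"
proof -
  obtain c where c: "finite (supp2 c)" "b = xy_comb c" using b xy_span_def by blast
  have "(h \<circ> b) = (\<lambda>p. \<Sum>s\<in>supp2 c. smult (c (fst s) (snd s)) (h (xy (fst s) (snd s) p)))"
    using c(2) by (simp add: fun_eq_iff xy_comb_alt lin_op_sum[OF l] lin_op_smult[OF l])
  moreover have "xy_span (\<lambda>p. \<Sum>s\<in>supp2 c. smult (c (fst s) (snd s)) (h (xy (fst s) (snd s) p)))"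
    using c(1) h by (intro xy_span_sum xy_span_smult ballI) auto
  ultimately show ?thesis by simp
qed

lemma xy_span_comp: "a \<in> S1 \<Longrightarrow> xy_span b \<Longrightarrow> xy_span (a \<circ> b)"
proof (induction a arbitrary: b rule: S1.induct)
  case S1_X
  show ?case
    by (rule xy_span_left[OF lin_op_opX S1_X.prems]) (simp add: opX_xy xy_span_xy[of 1, simplified])
next
  case S1_Y
  show ?case
    by (rule xy_span_left[OF lin_op_opY S1_Y.prems]) (simp add: opY_xy xy_span_xy[of 1, simplified])
next
  case S1_one then show ?case by simp
next
  case (S1_add a1 a2)
  have "(\<lambda>p. a1 p + a2 p) \<circ> b = (\<lambda>p. (a1 \<circ> b) p + (a2 \<circ> b) p)" by auto
  then show ?case using S1_add xy_span_add by metis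
next
  case (S1_smult a k)
  have "(\<lambda>p. smult k (a p)) \<circ> b = (\<lambda>p. smult k ((a \<circ> b) p))" by auto
  then show ?case using S1_smult xy_span_smult by metis
next
  case (S1_mult a1 a2)
  then show ?case by (simp add: comp_assoc)
qed

lemma xy_span_id: "xy_span (id :: 'k::field_char_0 poly \<Rightarrow> 'k poly)"
proof -
  have "id = (\<lambda>p. smult 1 (xy 0 0 p :: 'k poly))" by (simp add: fun_eq_iff xy_def)
  then show ?thesis using xy_span_xy by metis
qed

lemma S1_xy_span: "a \<in> S1 \<Longrightarrow> xy_span a"
  using xy_span_comp[OF _ xy_span_id] by simp

lemma lin_op_S1: "a \<in> S1 \<Longrightarrow> lin_op a"
proof (induction a rule: S1.induct)
  case S1_X then show ?case by (rule lin_op_opX)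
next
  case S1_Y then show ?case by (rule lin_op_opY)
next
  case S1_one then show ?case by (simp add: lin_op_def)
next
  case (S1_add a b) then show ?case using lin_op_plus by blast
next
  case (S1_smult a c) then show ?case by (simp add: lin_op_def smult_add_right)
next
  case (S1_mult a b) then show ?case using lin_op_comp[of a b] by (simp add: comp_def)
qed

lemma bar_acts_as:
  assumes "a \<in> S1" shows "\<exists>N. acts_as a (bar a) N" and "acts_as a u N \<Longrightarrow> bar a = u"
proof -
  obtain c where c: "finite (supp2 c)" "a = xy_comb c"
    using S1_xy_span[OF assms] xy_span_def by blast
  have L: "acts_as a (laurent_comb c) (y_bound c)" using acts_as_xy_comb[OF c(1)] c(2) by simp
  have b: "bar a = laurent_comb c"
    unfolding bar_def
  proof (rule the_equality)
    show "\<exists>c'. finite (supp2 c') \<and> a = xy_comb c' \<and> laurent_comb c = laurent_comb c'"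
      using c by blast
    fix u assume "\<exists>c'. finite (supp2 c') \<and> a = xy_comb c' \<and> u = laurent_comb c'"
    then obtain c' where c': "finite (supp2 c')" "a = xy_comb c'" "u = laurent_comb c'" by blast
    have "acts_as a u (y_bound c')" using acts_as_xy_comb[OF c'(1)] c'(2,3) by simp
    then show "u = laurent_comb c" using acts_as_unique L by blast
  qed
  show "\<exists>N. acts_as a (bar a) N" using L b by auto
  show "acts_as a u N \<Longrightarrow> bar a = u" using L b acts_as_unique by metis
qed


lemma S1_bar_comb:
  assumes "a \<in> S1" obtains c where "finite (supp2 c)" "a = xy_comb c" "bar a = laurent_comb c"
proof -
  obtain c where c: "finite (supp2 c)" "a = xy_comb c"
    using S1_xy_span[OF assms] xy_span_def by blast
  have "bar a = laurent_comb c" using bar_acts_as(2)[OF assms] acts_as_xy_comb[OF c(1)] c(2) by simp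
  then show ?thesis using that c by blast
qed

lemma E_apply: "E i j p = monom (coeff p j) i"
proof -
  have "\<And>n. \<not> n < Suc i \<Longrightarrow> Suc (n + j - Suc i) = n + j - i" by arith
  then show ?thesis
    by (auto simp: E_def xy_eq poly_eq_iff coeff_poly_shift coeff_monom_mult coeff_monom)
qed

lemma coefficient_functional_comb_in_F:
  fixes r :: "nat \<Rightarrow> 'k::field_char_0 poly"
  shows "(\<lambda>p. \<Sum>j<N. smult (coeff p j) (r j)) \<in> F"
proof -
  define D where "D = (\<Sum>j<N. degree (r j))"
  have deg_r: "j < N \<Longrightarrow> degree (r j) \<le> D" for j
    unfolding D_def by (rule member_le_sum) auto
  define c where "c i j = (if j < N then coeff (r j) i else 0)" for i j
  define S where "S = {..D} \<times> {..<N}"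
  have fin_S: "finite S" by (simp add: S_def)
  have supp_c: "supp2 c \<subseteq> S"
    using le_degree deg_r by (fastforce simp: supp2_def S_def c_def split: if_splits)
  have "(\<Sum>(i, j)\<in>supp2 c. smult (c i j) (E i j p)) = (\<Sum>j<N. smult (coeff p j) (r j))" for p
  proof -
    have "(\<Sum>(i, j)\<in>supp2 c. smult (c i j) (E i j p)) = (\<Sum>(i, j)\<in>S. smult (c i j) (E i j p))"
      by (rule sum.mono_neutral_left[OF fin_S supp_c]) (auto simp: supp2_def)
    also have "\<dots> = (\<Sum>j<N. \<Sum>i\<le>D. smult (c i j) (E i j p))"
      unfolding S_def by (subst sum.cartesian_product[symmetric]) (rule sum.swap)
    also have "\<dots> = (\<Sum>j<N. smult (coeff p j) (r j))"
    proof (rule sum.cong[OF refl])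
      fix j assume "j \<in> {..<N}"
      then have "(\<Sum>i\<le>D. smult (c i j) (E i j p)) =
          smult (coeff p j) (\<Sum>i\<le>D. monom (coeff (r j) i) i)"
        by (simp add: E_apply c_def smult_monom mult.commute pvs.scale_sum_right)
      also have "(\<Sum>i\<le>D. monom (coeff (r j) i) i) = r j"
        using deg_r \<open>j \<in> {..<N}\<close> by (intro poly_as_sum_of_monoms') simp
      finally show "(\<Sum>i\<le>D. smult (c i j) (E i j p)) = smult (coeff p j) (r j)" .
    qed
    finally show ?thesis .
  qed
  moreover have "finite (supp2 c)" using fin_S supp_c finite_subset by blast
  ultimately show ?thesis unfolding F_def by (auto intro!: exI[of _ c])
qed

text \<open>An element of S_1 with zero symbol kills all multiples of x^N for some N, so it only sees the
  first N coefficients and lies in F. Hence a \<notin> F has a nonzero symbol.\<close>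

lemma bar_zero_in_F:
  assumes aS: "a \<in> S1" and bar0: "bar a = 0"
  shows "a \<in> F"
proof -
  obtain N where N: "acts_as a 0 N" using bar_acts_as(1)[OF aS] bar0 by auto
  have lin_a: "lin_op a" by (rule lin_op_S1[OF aS])
  have "a p = (\<Sum>j<N. smult (coeff p j) (a (monom 1 j)))" for p
  proof -
    have "vanishes_below N (p - poly_cutoff N p)"
      by (simp add: vanishes_below_def coeff_poly_cutoff)
    then have "a (p - poly_cutoff N p) = 0" using N by (simp add: acts_as_def fls_of_poly_eq_0)
    then have "a p = a (poly_cutoff N p)" by (simp add: lin_op_diff[OF lin_a])
    also have "poly_cutoff N p = (\<Sum>j<N. smult (coeff p j) (monom 1 j))"
      by (simp add: poly_eq_iff coeff_poly_cutoff coeff_sum smult_monom coeff_monom)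
    finally show ?thesis by (simp add: lin_op_sum[OF lin_a] lin_op_smult[OF lin_a])
  qed
  then have "a = (\<lambda>p. \<Sum>j<N. smult (coeff p j) (a (monom 1 j)))" by blast
  then show ?thesis using coefficient_functional_comb_in_F by metis
qed

text \<open>If a \<in> S_1 has nonzero symbol u and acts as u beyond N, then on the multiples of x^N
  it is the model operator p \<mapsto> q \<cdot> (p shifted down by N) with q = a(x^N) = u x^N.\<close>

lemma S1_eventually_model:
  fixes a :: "'k::field_char_0 poly \<Rightarrow> 'k poly"
  assumes aS: "a \<in> S1" and nz: "bar a \<noteq> 0"
  obtains N q where "q \<noteq> 0" "fls_of_poly q = bar a * fls_X_intpow (int N)"
    "\<And>p. vanishes_below N p \<Longrightarrow> a p = q * poly_shift N p"
proof -
  obtain N where N: "acts_as a (bar a) N" using bar_acts_as(1)[OF aS] by blast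
  define q where "q = a (monom 1 N)"
  have fls_monom_mult: "fls_of_poly (monom 1 N * r) = fls_X_intpow (int N) * fls_of_poly r"
    for r :: "'k poly"
    using fls_X_intpow_times_conv_shift(1)[of "int N" "fls_of_poly r"]
    by (simp add: fls_of_poly_monom_mult)
  have "vanishes_below N (monom 1 N :: 'k poly)" by (simp add: vanishes_below_def coeff_monom)
  then have fls_q: "fls_of_poly q = bar a * fls_X_intpow (int N)"
    using N fls_monom_mult[of 1] by (simp add: acts_as_def q_def fls_of_poly_one)
  then have "q \<noteq> 0" using nz by auto
  moreover have "a p = q * poly_shift N p" if "vanishes_below N p" for p
  proof -
    have "p = monom 1 N * poly_shift N p"
      using that by (auto simp: vanishes_below_def poly_eq_iff coeff_monom_mult coeff_poly_shift)
    then have "fls_of_poly (a p) = bar a * (fls_X_intpow (int N) * fls_of_poly (poly_shift N p))"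
      using N that by (metis acts_as_def fls_monom_mult)
    also have "\<dots> = fls_of_poly (q * poly_shift N p)"
      by (simp add: fls_of_poly_mult fls_q mult.assoc)
    finally show ?thesis by (simp add: fls_of_poly_inj)
  qed
  ultimately show ?thesis using that fls_q by blast
qed

lemma laurent_deg_shifted:
  fixes q :: "'k::field poly"
  assumes q: "q \<noteq> 0" and qu: "fls_of_poly q = u * fls_X_intpow (int N)"
  shows "laurent_deg u = int (degree q) - int N"
proof -
  have u_nth: "fls_nth u n = (if n + int N < 0 then 0 else coeff q (nat (n + int N)))" for n
    using qu fls_X_intpow_times_conv_shift(2)[of u "int N"] fls_of_poly_nth[of q "n + int N"]
    by simp
  have bound: "n \<le> int (degree q) - int N" if "fls_nth u n \<noteq> 0" for n
  proof -
    have "0 \<le> n + int N" "coeff q (nat (n + int N)) \<noteq> 0"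
      using that by (auto simp: u_nth split: if_splits)
    then show ?thesis using le_degree[of q "nat (n + int N)"] by linarith
  qed
  show ?thesis unfolding laurent_deg_def
  proof (rule Max_eqI)
    have "{n. fls_nth u n \<noteq> 0} \<subseteq> {- int N..int (degree q) - int N}"
      using bound by (force simp: u_nth split: if_splits)
    then show "finite {n. fls_nth u n \<noteq> 0}" using finite_subset by blast
    show "int (degree q) - int N \<in> {n. fls_nth u n \<noteq> 0}" using q by (simp add: u_nth)
  qed (use bound in blast)
qed

theorem index_S1:
  fixes a :: "'k::field_char_0 poly \<Rightarrow> 'k poly"
  assumes aS: "a \<in> S1" and nz: "bar a \<noteq> 0"
  shows "fin_dim_ker a \<and> fin_dim_coker a \<and> ind a = - laurent_deg (bar a)"
proof -
  obtain N q where q: "q \<noteq> 0" "fls_of_poly q = bar a * fls_X_intpow (int N)"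
    and model: "\<And>p. vanishes_below N p \<Longrightarrow> a p = q * poly_shift N p"
    using S1_eventually_model[OF aS nz] by blast
  show ?thesis
    using index_eventually_model[OF lin_op_S1[OF aS] q(1) model] laurent_deg_shifted[OF q] by simp
qed

lemma S1_zero: "(\<lambda>p. 0) \<in> S1"
  using S1_smult[OF S1_one, of 0] by simp

lemma S1_sum: "finite A \<Longrightarrow> \<forall>s\<in>A. f s \<in> S1 \<Longrightarrow> (\<lambda>p. \<Sum>s\<in>A. f s p) \<in> S1"
proof (induction A rule: finite_induct)
  case empty then show ?case using S1_zero by simp
next
  case (insert x A)
  then have "(\<lambda>p. f x p + (\<Sum>s\<in>A. f s p)) \<in> S1" by (intro S1_add) auto
  then show ?case using insert by simp
qed

lemma S1_pow: "f \<in> S1 \<Longrightarrow> f ^^ n \<in> S1"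
  by (induction n) (auto intro: S1_mult S1_one)

lemma S1_xy: "xy i j \<in> S1"
  unfolding xy_def by (intro S1_mult S1_pow S1_X S1_Y)

text \<open>The symbol map a \<mapsto> a-bar is a K-algebra homomorphism S_1 \<rightarrow> K[x,x^-1]: acting as u beyond
  some N is compatible with sums, scalars and composition (for the composite, b p is again
  divisible by a high enough power of x).\<close>

lemma acts_as_add:
  assumes "acts_as a u N" "acts_as b w M"
  shows "acts_as (\<lambda>p. a p + b p) (u + w) (max N M)"
proof -
  have "fls_of_poly (a p + b p) = (u + w) * fls_of_poly p" if "vanishes_below (max N M) p" for p
  proof -
    have "vanishes_below N p" "vanishes_below M p" using vanishes_below_mono[OF that] by auto
    then show ?thesis using assms by (simp add: acts_as_def fls_of_poly_add distrib_right)
  qed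
  then show ?thesis by (simp add: acts_as_def)
qed

lemma acts_as_smult: "acts_as a u N \<Longrightarrow> acts_as (\<lambda>p. smult k (a p)) (fls_const k * u) N"
  unfolding acts_as_def by (auto simp: fls_of_poly_smult mult.assoc)

lemma acts_as_id: "acts_as id 1 0"
  unfolding acts_as_def by simp

lemma vanishes_below_subdegree:
  "vanishes_below M p \<Longrightarrow> p \<noteq> 0 \<Longrightarrow> int M \<le> fls_subdegree (fls_of_poly p)"
  by (rule fls_subdegree_geI) (auto simp: fls_of_poly_eq_0 fls_of_poly_nth vanishes_below_def)

lemma acts_as_comp:
  fixes a b :: "'k::field_char_0 poly \<Rightarrow> 'k poly"
  assumes A: "acts_as a u N" and B: "acts_as b w M"
  shows "acts_as (a \<circ> b) (u * w) (M + N + nat (- fls_subdegree w))"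
  unfolding acts_as_def
proof (intro allI impI)
  fix p :: "'k poly" assume lp: "vanishes_below (M + N + nat (- fls_subdegree w)) p"
  have e: "fls_of_poly (b p) = w * fls_of_poly p"
    using B vanishes_below_mono[OF lp, of M] by (simp add: acts_as_def)
  have "vanishes_below N (b p)"
    unfolding vanishes_below_def
  proof (intro allI impI)
    fix i assume i: "i < N"
    have "coeff (b p) i = fls_nth (fls_of_poly (b p)) (int i)" by (simp add: fls_of_poly_nth)
    also have "\<dots> = fls_nth (w * fls_of_poly p) (int i)" by (simp add: e)
    also have "\<dots> = 0"
    proof (cases "w = 0 \<or> p = 0")
      case True then show ?thesis by auto
    next
      case False
      then have "int (M + N + nat (- fls_subdegree w)) \<le> fls_subdegree (fls_of_poly p)"
        using vanishes_below_subdegree[OF lp] by blast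
      then have "int i < fls_subdegree w + fls_subdegree (fls_of_poly p)" using i by linarith
      then show ?thesis by (rule fls_times_nth_eq0)
    qed
    finally show "coeff (b p) i = 0" .
  qed
  then have "fls_of_poly (a (b p)) = u * fls_of_poly (b p)" using A by (simp add: acts_as_def)
  then show "fls_of_poly ((a \<circ> b) p) = u * w * fls_of_poly p" by (simp add: e mult.assoc)
qed

lemma bar_add: "a \<in> S1 \<Longrightarrow> b \<in> S1 \<Longrightarrow> bar (\<lambda>p. a p + b p) = bar a + bar b"
proof -
  assume a: "a \<in> S1" and b: "b \<in> S1"
  obtain N M where "acts_as a (bar a) N" "acts_as b (bar b) M" using bar_acts_as(1) a b by blast
  then have "acts_as (\<lambda>p. a p + b p) (bar a + bar b) (max N M)" by (rule acts_as_add)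
  then show ?thesis using bar_acts_as(2)[OF S1_add[OF a b]] by blast
qed

lemma bar_smult: "a \<in> S1 \<Longrightarrow> bar (\<lambda>p. smult k (a p)) = fls_const k * bar a"
proof -
  assume a: "a \<in> S1"
  obtain N where "acts_as a (bar a) N" using bar_acts_as(1) a by blast
  then have "acts_as (\<lambda>p. smult k (a p)) (fls_const k * bar a) N" by (rule acts_as_smult)
  then show ?thesis using bar_acts_as(2)[OF S1_smult[OF a]] by blast
qed

lemma bar_id: "bar id = 1"
  using bar_acts_as(2)[OF S1_one acts_as_id] .

lemma bar_comp: "a \<in> S1 \<Longrightarrow> b \<in> S1 \<Longrightarrow> bar (a \<circ> b) = bar a * bar b"
proof -
  assume a: "a \<in> S1" and b: "b \<in> S1"
  obtain N M where "acts_as a (bar a) N" "acts_as b (bar b) M" using bar_acts_as(1) a b by blast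
  then have "acts_as (a \<circ> b) (bar a * bar b) (M + N + nat (- fls_subdegree (bar b)))"
    by (rule acts_as_comp)
  then show ?thesis using bar_acts_as(2)[OF S1_mult[OF a b]] by blast
qed

lemma bar_zero: "bar (\<lambda>p. 0) = 0"
proof -
  have "acts_as (\<lambda>p. 0) 0 0" by (simp add: acts_as_def)
  then show ?thesis using bar_acts_as(2)[OF S1_zero] by blast
qed

lemma bar_sum: "finite A \<Longrightarrow> \<forall>s\<in>A. f s \<in> S1 \<Longrightarrow> bar (\<lambda>p. \<Sum>s\<in>A. f s p) = (\<Sum>s\<in>A. bar (f s))"
proof (induction A rule: finite_induct)
  case empty then show ?case using bar_zero by simp
next
  case (insert x A)
  have "bar (\<lambda>p. f x p + (\<Sum>s\<in>A. f s p)) = bar (f x) + bar (\<lambda>p. \<Sum>s\<in>A. f s p)"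
    using insert by (intro bar_add S1_sum) auto
  then show ?case using insert by simp
qed

lemma bar_pow: "f \<in> S1 \<Longrightarrow> bar (f ^^ n) = bar f ^ n"
  by (induction n) (simp_all add: bar_id bar_comp S1_pow)

lemma bar_xy: "bar (xy i j) = fls_X_intpow (int i - int j)"
proof -
  have "acts_as (xy i j) (fls_X_intpow (int i - int j)) j"
    unfolding acts_as_def using fls_of_poly_xy by blast
  then show ?thesis using bar_acts_as(2)[OF S1_xy] by blast
qed

lemma bar_opX: "bar (opX :: 'k::field_char_0 poly \<Rightarrow> 'k poly) = fls_X_intpow 1"
  using bar_xy[of 1 0] by (simp add: opX_eq_xy)

lemma sum_if_nonzero_ex:
  "(\<Sum>x\<in>A. if P x then f x else 0) \<noteq> (0 :: 'a::comm_monoid_add) \<Longrightarrow> \<exists>x\<in>A. P x"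
  by (metis (mono_tags, lifting) sum.neutral)

lemma laurent_nth: "fls_nth (laurent_comb c) n =
  (\<Sum>x\<in>supp2 c. if n = int (fst x) - int (snd x) then c (fst x) (snd x) else 0)"
  unfolding laurent_comb_def by (auto simp: fls_nth_sum case_prod_beta intro!: sum.cong)

lemma finite_support_bar:
  assumes "a \<in> S1" shows "finite {n. fls_nth (bar a) n \<noteq> 0}"
proof -
  obtain c where c: "finite (supp2 c)" "bar a = laurent_comb c" using S1_bar_comb[OF assms] by metis
  have "{n. fls_nth (bar a) n \<noteq> 0} \<subseteq> (\<lambda>x. int (fst x) - int (snd x)) ` supp2 c"
    using sum_if_nonzero_ex by (fastforce simp: c(2) laurent_nth)
  then show ?thesis using c(1) finite_subset by blast
qed

lemma aut_D:
  assumes "is_S1_aut \<sigma>"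
  shows "bij_betw \<sigma> S1 S1"
    and "\<forall>a\<in>S1. \<forall>b\<in>S1. \<sigma> (\<lambda>p. a p + b p) = (\<lambda>p. \<sigma> a p + \<sigma> b p)"
    and "\<forall>a\<in>S1. \<forall>c. \<sigma> (\<lambda>p. smult c (a p)) = (\<lambda>p. smult c (\<sigma> a p))"
    and "\<forall>a\<in>S1. \<forall>b\<in>S1. \<sigma> (a \<circ> b) = \<sigma> a \<circ> \<sigma> b"
    and "\<sigma> id = id"
  using assms unfolding is_S1_aut_def by simp_all

lemma aut_S1: "is_S1_aut \<sigma> \<Longrightarrow> a \<in> S1 \<Longrightarrow> \<sigma> a \<in> S1"
  using aut_D(1) bij_betw_apply by metis

lemma aut_add: "is_S1_aut \<sigma> \<Longrightarrow> a \<in> S1 \<Longrightarrow> b \<in> S1 \<Longrightarrow> \<sigma> (\<lambda>p. a p + b p) = (\<lambda>p. \<sigma> a p + \<sigma> b p)"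
  using aut_D(2) by blast

lemma aut_smult: "is_S1_aut \<sigma> \<Longrightarrow> a \<in> S1 \<Longrightarrow> \<sigma> (\<lambda>p. smult k (a p)) = (\<lambda>p. smult k (\<sigma> a p))"
  using aut_D(3) by blast

lemma aut_comp: "is_S1_aut \<sigma> \<Longrightarrow> a \<in> S1 \<Longrightarrow> b \<in> S1 \<Longrightarrow> \<sigma> (a \<circ> b) = \<sigma> a \<circ> \<sigma> b"
  using aut_D(4) by blast

lemma aut_id: "is_S1_aut \<sigma> \<Longrightarrow> \<sigma> id = id"
  using aut_D(5) by blast

lemma aut_zero: "is_S1_aut \<sigma> \<Longrightarrow> \<sigma> (\<lambda>p. 0) = (\<lambda>p. 0)"
proof -
  assume s: "is_S1_aut \<sigma>"
  have "\<sigma> (\<lambda>p. smult 0 (id p)) = (\<lambda>p. smult 0 (\<sigma> id p))" by (rule aut_smult[OF s S1_one])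
  then show ?thesis by simp
qed

lemma aut_sum:
  assumes s: "is_S1_aut \<sigma>" and A: "finite A" "\<forall>s\<in>A. f s \<in> S1"
  shows "\<sigma> (\<lambda>p. \<Sum>s\<in>A. f s p) = (\<lambda>p. \<Sum>s\<in>A. \<sigma> (f s) p)"
  using A
proof (induction A rule: finite_induct)
  case empty then show ?case using aut_zero[OF s] by simp
next
  case (insert x A)
  have "\<sigma> (\<lambda>p. f x p + (\<Sum>s\<in>A. f s p)) = (\<lambda>p. \<sigma> (f x) p + \<sigma> (\<lambda>p. \<Sum>s\<in>A. f s p) p)"
    using insert by (intro aut_add[OF s] S1_sum) auto
  then show ?case using insert by simp
qed

lemma aut_pow: "is_S1_aut \<sigma> \<Longrightarrow> f \<in> S1 \<Longrightarrow> \<sigma> (f ^^ n) = (\<sigma> f) ^^ n"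
  by (induction n) (simp_all add: aut_id aut_comp S1_pow fun_eq_iff)

lemma aut_xy:
  assumes s: "is_S1_aut \<sigma>" shows "\<sigma> (xy i j) = (\<sigma> opX ^^ i) \<circ> (\<sigma> opY ^^ j)"
proof -
  have "\<sigma> (xy i j) = \<sigma> (opX ^^ i) \<circ> \<sigma> (opY ^^ j)"
    unfolding xy_def by (rule aut_comp[OF s S1_pow[OF S1_X] S1_pow[OF S1_Y]])
  then show ?thesis by (simp only: aut_pow[OF s S1_X] aut_pow[OF s S1_Y])
qed

text \<open>Units of K[x,x^-1] are monomials: the top and bottom coefficients of a product of Laurent
  polynomials are the products of the top (resp. bottom) coefficients.\<close>

lemma laurent_deg_top:
  fixes U :: "'k::zero fls"
  assumes fin: "finite {n. fls_nth U n \<noteq> 0}" and U: "U \<noteq> 0"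
  shows "fls_nth U (laurent_deg U) \<noteq> 0" and "fls_nth U n \<noteq> 0 \<Longrightarrow> n \<le> laurent_deg U"
proof -
  have "{n. fls_nth U n \<noteq> 0} \<noteq> {}" using U fls_nonzero_nth by blast
  then show "fls_nth U (laurent_deg U) \<noteq> 0"
    using Max_in[OF fin] unfolding laurent_deg_def by blast
  show "fls_nth U n \<noteq> 0 \<Longrightarrow> n \<le> laurent_deg U"
    using Max_ge[OF fin] unfolding laurent_deg_def by blast
qed

lemma laurent_top_coeff_mult:
  fixes U V :: "'k::field fls"
  assumes fU: "finite {n. fls_nth U n \<noteq> 0}" and fV: "finite {n. fls_nth V n \<noteq> 0}"
    and U: "U \<noteq> 0" and V: "V \<noteq> 0"
  defines "dU \<equiv> laurent_deg U" and "dV \<equiv> laurent_deg V"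
  shows "fls_nth (U * V) (dU + dV) = fls_nth U dU * fls_nth V dV"
proof -
  note topU = laurent_deg_top[OF fU U, folded dU_def]
    and topV = laurent_deg_top[OF fV V, folded dV_def]
  have sub: "fls_subdegree U \<le> dU" "fls_subdegree V \<le> dV"
    using fls_subdegree_leI topU(1) topV(1) by blast+
  let ?I = "{fls_subdegree U..dU + dV - fls_subdegree V}"
  have other_terms: "fls_nth U i * fls_nth V (dU + dV - i) = 0" if "i \<noteq> dU" for i
  proof (cases "i < dU")
    case True
    then have "fls_nth V (dU + dV - i) = 0" using topV(2)[of "dU + dV - i"] by linarith
    then show ?thesis by simp
  next
    case False
    then have "fls_nth U i = 0" using topU(2)[of i] that by linarith
    then show ?thesis by simp
  qed
  have "fls_nth (U * V) (dU + dV) = (\<Sum>i\<in>?I. fls_nth U i * fls_nth V (dU + dV - i))"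
    by (rule fls_times_nth(2))
  also have "\<dots> = fls_nth U dU * fls_nth V (dU + dV - dU)
      + (\<Sum>i\<in>?I - {dU}. fls_nth U i * fls_nth V (dU + dV - i))"
    using sub by (intro sum.remove) auto
  also have "(\<Sum>i\<in>?I - {dU}. fls_nth U i * fls_nth V (dU + dV - i)) = 0"
    using other_terms by (intro sum.neutral) blast
  finally show ?thesis by simp
qed

lemma fls_monomial_mult:
  "(fls_const a * fls_X_intpow p) * (fls_const b * fls_X_intpow q) =
     fls_const (a * b) * (fls_X_intpow (p + q) :: 'k::field fls)"
proof -
  have "(fls_const a * fls_X_intpow p) * (fls_const b * fls_X_intpow q) =
     (fls_const a * fls_const b) * (fls_X_intpow p * (fls_X_intpow q :: 'k fls))"
    by (simp only: ac_simps)
  then show ?thesis by (simp only: fls_const_mult_const fls_X_intpow_times_fls_X_intpow)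
qed

lemma fls_monomial_power:
  "(fls_const a * fls_X_intpow p) ^ i =
     fls_const (a ^ i) * (fls_X_intpow (int i * p) :: 'k::field fls)"
proof (induction i)
  case (Suc i)
  have "(fls_const a * fls_X_intpow p) ^ Suc i
      = (fls_const a * fls_X_intpow p) * (fls_const (a ^ i) * fls_X_intpow (int i * p))"
    using Suc by simp
  also have "\<dots> = fls_const (a * a ^ i) * (fls_X_intpow (p + int i * p) :: 'k fls)"
    by (rule fls_monomial_mult)
  also have "p + int i * p = int (Suc i) * p" by (simp add: algebra_simps)
  finally show ?case by simp
qed simp

lemma laurent_unit_monomial:
  fixes U V :: "'k::field fls"
  assumes UV: "U * V = 1"
    and fU: "finite {n. fls_nth U n \<noteq> 0}" and fV: "finite {n. fls_nth V n \<noteq> 0}"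
  obtains l k where "l \<noteq> 0" "U = fls_const l * fls_X_intpow k"
    "V = fls_const (1 / l) * fls_X_intpow (- k)"
proof -
  have U: "U \<noteq> 0" and V: "V \<noteq> 0" using UV by auto
  define k where "k = laurent_deg U"
  define l where "l = fls_nth U k"
  note topU = laurent_deg_top[OF fU U, folded k_def]
    and topV = laurent_deg_top[OF fV V]
  have "fls_nth (U * V) (k + laurent_deg V) \<noteq> 0"
    using laurent_top_coeff_mult[OF fU fV U V] topU(1) topV(1) by (simp add: k_def)
  then have deg_sum: "k + laurent_deg V = 0" using UV by (simp split: if_splits)
  have "fls_subdegree (U * V) = fls_subdegree U + fls_subdegree V" using U V by simp
  then have "fls_subdegree U + fls_subdegree V = 0" using UV by simp
  moreover have "fls_subdegree U \<le> k" "fls_subdegree V \<le> laurent_deg V"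
    using fls_subdegree_leI topU(1) topV(1) by blast+
  ultimately have sub: "fls_subdegree U = k" using deg_sum by linarith
  have U_eq: "U = fls_const l * fls_X_intpow k"
  proof (rule fls_eqI)
    fix n
    have "fls_nth U n = 0" if "n \<noteq> k"
      using that topU(2)[of n] fls_eq0_below_subdegree[of n U] sub by fastforce
    then show "fls_nth U n = fls_nth (fls_const l * fls_X_intpow k) n" by (simp add: l_def)
  qed
  have "l \<noteq> 0" using topU(1) l_def by simp
  moreover have "V = fls_const (1 / l) * fls_X_intpow (- k)"
  proof -
    have "U * (fls_const (1 / l) * fls_X_intpow (- k)) =
        fls_const (l * (1 / l)) * fls_X_intpow (k + - k)"
      unfolding U_eq by (rule fls_monomial_mult)
    also have "\<dots> = U * V" using \<open>l \<noteq> 0\<close> UV by simp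
    finally show ?thesis using U by simp
  qed
  ultimately show ?thesis using that U_eq by blast
qed

text \<open>For an automorphism \<sigma>, the symbols of \<sigma>(x) and \<sigma>(y) are mutually inverse (as y x = 1),
  hence Laurent monomials.\<close>

lemma aut_symbols_of_generators:
  assumes s: "is_S1_aut \<sigma>"
  obtains l k where "l \<noteq> 0" "bar (\<sigma> opX) = fls_const l * fls_X_intpow k"
    "bar (\<sigma> opY) = fls_const (1 / l) * fls_X_intpow (- k)"
proof -
  have AS: "\<sigma> opX \<in> S1" and BS: "\<sigma> opY \<in> S1" using aut_S1[OF s] S1_X S1_Y by auto
  have "\<sigma> opY \<circ> \<sigma> opX = id" using aut_comp[OF s S1_Y S1_X] by (simp add: opY_opX aut_id[OF s])
  then have "bar (\<sigma> opY) * bar (\<sigma> opX) = 1" using bar_comp[OF BS AS] by (simp add: bar_id)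
  then have "bar (\<sigma> opX) * bar (\<sigma> opY) = 1" by (simp add: mult.commute)
  from laurent_unit_monomial[OF this finite_support_bar[OF AS] finite_support_bar[OF BS]] that
  show ?thesis by blast
qed

lemma bar_aut_xy:
  assumes s: "is_S1_aut \<sigma>"
    and X: "bar (\<sigma> opX) = fls_const l * fls_X_intpow k"
    and Y: "bar (\<sigma> opY) = fls_const m * fls_X_intpow (- k)"
  shows "bar (\<sigma> (xy i j)) = fls_const (l ^ i * m ^ j) * fls_X_intpow (k * (int i - int j))"
proof -
  have AS: "\<sigma> opX \<in> S1" and BS: "\<sigma> opY \<in> S1" using aut_S1[OF s] S1_X S1_Y by auto
  have "bar (\<sigma> (xy i j)) = bar (\<sigma> opX) ^ i * bar (\<sigma> opY) ^ j"
    using AS BS by (simp add: aut_xy[OF s] bar_comp bar_pow S1_pow)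
  also have "\<dots> = fls_const (l ^ i) * fls_X_intpow (int i * k) *
      (fls_const (m ^ j) * fls_X_intpow (int j * - k))"
    by (simp only: X Y fls_monomial_power)
  also have "\<dots> = fls_const (l ^ i * m ^ j) * fls_X_intpow (int i * k + int j * - k)"
    by (rule fls_monomial_mult)
  also have "int i * k + int j * - k = k * (int i - int j)" by (simp add: algebra_simps)
  finally show ?thesis .
qed

lemma bar_aut_xy_comb_nth:
  assumes s: "is_S1_aut \<sigma>" and c: "finite (supp2 c)"
    and X: "bar (\<sigma> opX) = fls_const l * fls_X_intpow k"
    and Y: "bar (\<sigma> opY) = fls_const m * fls_X_intpow (- k)"
  shows "fls_nth (bar (\<sigma> (xy_comb c))) n = (\<Sum>x\<in>supp2 c.
     if n = k * (int (fst x) - int (snd x)) then c (fst x) (snd x) * (l ^ fst x * m ^ snd x) else 0)"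
proof -
  define f where "f x = (\<lambda>p. smult (c (fst x) (snd x)) (xy (fst x) (snd x) p))" for x
  have fS: "\<forall>x\<in>supp2 c. f x \<in> S1" unfolding f_def by (auto intro: S1_smult S1_xy)
  have "xy_comb c = (\<lambda>p. \<Sum>x\<in>supp2 c. f x p)" by (simp add: fun_eq_iff xy_comb_alt f_def)
  then have "\<sigma> (xy_comb c) = (\<lambda>p. \<Sum>x\<in>supp2 c. \<sigma> (f x) p)" using aut_sum[OF s c fS] by simp
  then have "bar (\<sigma> (xy_comb c)) = (\<Sum>x\<in>supp2 c. bar (\<sigma> (f x)))"
    using bar_sum[OF c, of "\<lambda>x. \<sigma> (f x)"] fS aut_S1[OF s] by simp
  also have "\<dots> = (\<Sum>x\<in>supp2 c. fls_const (c (fst x) (snd x)) * bar (\<sigma> (xy (fst x) (snd x))))"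
    unfolding f_def using aut_smult[OF s S1_xy] bar_smult[OF aut_S1[OF s S1_xy]] by simp
  finally show ?thesis by (auto simp: fls_nth_sum bar_aut_xy[OF s X Y] intro!: sum.cong)
qed

text \<open>The exponent k is \<plusminus>1: x = \<sigma>(a) for some a, and comparing the coefficient of x^1 in
  the symbols shows that 1 is a multiple of k.\<close>

lemma aut_exponent_unit:
  assumes s: "is_S1_aut \<sigma>"
    and X: "bar (\<sigma> opX) = fls_const l * fls_X_intpow k"
    and Y: "bar (\<sigma> opY) = fls_const m * fls_X_intpow (- k)"
  shows "k = 1 \<or> k = -1"
proof -
  have "\<sigma> ` S1 = S1" by (rule bij_betw_imp_surj_on[OF aut_D(1)[OF s]])
  then have "opX \<in> \<sigma> ` S1" using S1_X by (simp only:)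
  then obtain a where a: "a \<in> S1" "\<sigma> a = opX" by (metis imageE)
  obtain c where c: "finite (supp2 c)" "a = xy_comb c" using S1_bar_comb[OF a(1)] by blast
  have "fls_nth (bar (\<sigma> a)) 1 = 1" unfolding a(2) bar_opX by simp
  then have "fls_nth (bar (\<sigma> (xy_comb c))) 1 = 1" by (simp only: c(2))
  then have "(\<Sum>x\<in>supp2 c. if 1 = k * (int (fst x) - int (snd x))
      then c (fst x) (snd x) * (l ^ fst x * m ^ snd x) else 0) \<noteq> 0"
    by (simp only: bar_aut_xy_comb_nth[OF s c(1) X Y]) simp
  from sum_if_nonzero_ex[OF this] obtain x where "1 = k * (int (fst x) - int (snd x))" by blast
  then have "k * (int (fst x) - int (snd x)) = 1" by simp
  then show ?thesis by (rule pos_zmult_eq_1_iff_lemma)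
qed

lemma ind_injective:
  assumes "ker f = {0}" shows "ind f = - int (dim_coker f)"
  using assms by (simp add: ind_def dim_zero_space)

text \<open>The exponent k is not -1: \<sigma>(x) is injective (it has the left inverse \<sigma>(y)), so its
  index is \<le> 0, whereas by part (1) its index would be -deg(x^-1) = 1.\<close>

lemma aut_exponent_not_neg:
  assumes s: "is_S1_aut \<sigma>" and l: "l \<noteq> 0"
    and X: "bar (\<sigma> opX) = fls_const l * fls_X_intpow k"
  shows "k \<noteq> -1"
proof
  assume k: "k = -1"
  have AS: "\<sigma> opX \<in> S1" and BS: "\<sigma> opY \<in> S1" using aut_S1[OF s] S1_X S1_Y by auto
  have "fls_nth (bar (\<sigma> opX)) n = (if n = -1 then l else 0)" for n using X k by simp
  then have "{n. fls_nth (bar (\<sigma> opX)) n \<noteq> 0} = {-1}" using l by auto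
  then have "laurent_deg (bar (\<sigma> opX)) = -1" by (simp add: laurent_deg_def)
  then have ind1: "ind (\<sigma> opX) = 1" using index_S1[OF AS] X l by simp
  have left_inv: "\<sigma> opY (\<sigma> opX p) = p" for p
    using aut_comp[OF s S1_Y S1_X] by (simp add: opY_opX aut_id[OF s] fun_eq_iff)
  have "ker (\<sigma> opX) = {0}"
  proof
    show "{0} \<subseteq> ker (\<sigma> opX)" using lin_op_0[OF lin_op_S1[OF AS]] by (simp add: ker_def)
    show "ker (\<sigma> opX) \<subseteq> {0}"
    proof
      fix p assume "p \<in> ker (\<sigma> opX)"
      then have "\<sigma> opY (\<sigma> opX p) = 0" using lin_op_0[OF lin_op_S1[OF BS]] by (simp add: ker_def)
      then show "p \<in> {0}" using left_inv by simp
    qed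
  qed
  then show False using ind_injective[of "\<sigma> opX"] ind1 by simp
qed

lemma aut_scales_symbol:
  assumes s: "is_S1_aut \<sigma>"
  obtains l :: "'k::field_char_0" where "l \<noteq> 0"
    "\<And>a n. a \<in> (S1 :: ('k poly \<Rightarrow> 'k poly) set) \<Longrightarrow>
       fls_nth (bar (\<sigma> a)) n = l powi n * fls_nth (bar a) n"
proof -
  obtain l k where l: "l \<noteq> 0" and X: "bar (\<sigma> opX) = fls_const l * fls_X_intpow k"
    and Y: "bar (\<sigma> opY) = fls_const (1 / l) * fls_X_intpow (- k)"
    using aut_symbols_of_generators[OF s] by blast
  have k: "k = 1" using aut_exponent_unit[OF s X Y] aut_exponent_not_neg[OF s l X] by simp
  have "fls_nth (bar (\<sigma> a)) n = l powi n * fls_nth (bar a) n" if aS: "a \<in> S1" for a n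
  proof -
    obtain c where c: "finite (supp2 c)" "a = xy_comb c" "bar a = laurent_comb c"
      using S1_bar_comb[OF aS] by metis
    have coeff_term: "(if n = int i - int j then c i j * (l ^ i * (1 / l) ^ j) else 0)
        = l powi n * (if n = int i - int j then c i j else 0)" for i j
    proof (cases "n = int i - int j")
      case True
      then have e: "l powi n = l ^ i / l ^ j" using l by (simp add: power_int_diff)
      show ?thesis unfolding e using True by (simp add: power_one_over field_simps)
    qed simp
    have "fls_nth (bar (\<sigma> a)) n = (\<Sum>x\<in>supp2 c.
        l powi n * (if n = int (fst x) - int (snd x) then c (fst x) (snd x) else 0))"
      using bar_aut_xy_comb_nth[OF s c(1) X Y, of n] k by (simp add: c(2) coeff_term)
    also have "\<dots> = l powi n * fls_nth (bar a) n"
      by (simp add: c(3) laurent_nth sum_distrib_left)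
    finally show ?thesis .
  qed
  then show ?thesis using that l by blast
qed

theorem index_aut_invariant:
  fixes a :: "'k::field_char_0 poly \<Rightarrow> 'k poly"
  assumes s: "is_S1_aut \<sigma>" and aS: "a \<in> S1" and nz: "bar a \<noteq> 0"
  shows "ind (\<sigma> a) = ind a"
proof -
  obtain l :: 'k where l: "l \<noteq> 0"
    and scale: "\<And>n. fls_nth (bar (\<sigma> a)) n = l powi n * fls_nth (bar a) n"
    using aut_scales_symbol[OF s] aS by metis
  have same_support: "{n. fls_nth (bar (\<sigma> a)) n \<noteq> 0} = {n. fls_nth (bar a) n \<noteq> 0}"
    using scale l by (simp add: power_int_not_zero)
  then have "bar (\<sigma> a) \<noteq> 0" using nz fls_nonzero_nth by (metis (mono_tags) mem_Collect_eq)
  then have "ind (\<sigma> a) = - laurent_deg (bar (\<sigma> a))" using index_S1[OF aut_S1[OF s aS]] by simp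
  also have "\<dots> = - laurent_deg (bar a)" unfolding laurent_deg_def same_support ..
  also have "\<dots> = ind a" using index_S1[OF aS nz] by simp
  finally show ?thesis .
qed

theorem lemma4p4:
  shows "(\<forall>a \<in> (S1 :: ('k::field_char_0 poly \<Rightarrow> 'k poly) set) - F.
            fin_dim_ker a \<and> fin_dim_coker a \<and> ind a = - laurent_deg (bar a))
       \<and> (\<forall>\<sigma> :: ('k poly \<Rightarrow> 'k poly) \<Rightarrow> ('k poly \<Rightarrow> 'k poly). is_S1_aut \<sigma> \<longrightarrow>
            (\<forall>a \<in> S1 - F. ind (\<sigma> a) = ind a))"
proof (rule conjI)
  show "\<forall>a \<in> (S1 :: ('k::field_char_0 poly \<Rightarrow> 'k poly) set) - F.
          fin_dim_ker a \<and> fin_dim_coker a \<and> ind a = - laurent_deg (bar a)"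
    using index_S1 bar_zero_in_F by blast
  show "\<forall>\<sigma> :: ('k poly \<Rightarrow> 'k poly) \<Rightarrow> ('k poly \<Rightarrow> 'k poly). is_S1_aut \<sigma> \<longrightarrow>
          (\<forall>a \<in> S1 - F. ind (\<sigma> a) = ind a)"
    using index_aut_invariant bar_zero_in_F by blast
qed

end
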